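(* Let $X$ be a complex vector space with $\dim_{\mathbb{C}}X\ge2$ and $Y\ne\{0\}$ a sequentially complete Hausdorff complex locally convex space. Let $\Omega_0,\Omega\subset X$ be $1$-open sets and $C\subset\Omega_0\cap\Omega$. Assume that for every $f\in\mathcal{H}_G(\Omega_0,Y)$ there is a unique $\bar f\in\mathcal{H}_G(\Omega,Y)$ with $\bar f|_C=f|_C$. Then: (a) For every $h\in\mathcal{H}_G(\Omega_0)$ there is a unique $\bar h\in\mathcal{H}_G(\Omega)$ with $\bar h|_C=h|_C$; moreover $\overline{h f}=\bar h\bar f$ for all $h\in\mathcal{H}_G(\Omega_0)$, $f\in\mathcal{H}_G(\Omega_0,Y)$; $\bar h(\Omega)\subset h(\Omega_0)$ for every $h\in\mathcal{H}_G(\Omega_0)$; and $\bar f(\Omega)\subset\overline{\mathrm{co}}(f(\Omega_0))$ for every $f\in\mathcal{H}_G(\Omega_0,Y)$. (b) If $Y$ is a unital complex Banach algebra (not necessarily commutative), then $H:\mathcal{H}_G(\Omega_0,Y)\to\mathcal{H}_G(\Omega,Y)$, $H(f)=\bar f$, is a unital $\mathbb{C}$-algebra morphism, and for every $f\in\mathcal{H}_G(\Omega_0,Y)$ with $f(\Omega_0)\subset U(Y)$ one has $\bar f(\Omega)\subset U(Y)$, where $U(Y)$ is the set of invertible elements of $Y$.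
   Context: $A\subset X$ is $1$-open if $A\cap L$ is open in $L$ for every complex affine line $L\subset X$. $\mathcal{H}_G(\Omega,Y)$ (Gâteaux holomorphic maps): $f:\Omega\to Y$ such that for all $a\in\Omega$, $v\in X$, $\varphi\in Y^*$, $\lambda\mapsto\varphi(f(a+\lambda v))$ is holomorphic on some disc around $0$; $\mathcal{H}_G(\Omega)=\mathcal{H}_G(\Omega,\mathbb{C})$. $\overline{\mathrm{co}}$ denotes the closed convex hull. *)

theory Defs
  imports "HOL-Analysis.Analysis"
begin

text \<open>The library has no class of complex vector spaces; we define one (as in the usual
development, a complex vector space is in particular a real vector space, with the
real scalar multiplication being the restriction of the complex one).\<close>

class complex_vector = real_vector +
  fixes scaleC :: "complex \<Rightarrow> 'a \<Rightarrow> 'a"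
  assumes scaleC_add_right: "scaleC a (x + y) = scaleC a x + scaleC a y"
    and scaleC_add_left: "scaleC (a + b) x = scaleC a x + scaleC b x"
    and scaleC_scaleC: "scaleC a (scaleC b x) = scaleC (a * b) x"
    and scaleC_one: "scaleC 1 x = x"
    and scaleR_scaleC: "scaleR r x = scaleC (of_real r) x"

class complex_banach_algebra_1 = complex_vector + real_normed_algebra_1 + banach +
  assumes norm_scaleC: "norm (scaleC a x) = cmod a * norm x"
    and scaleC_mult_left: "scaleC a (x * y) = scaleC a x * y"
    and scaleC_mult_right: "scaleC a (x * y) = x * scaleC a y"

definition seminorm :: "('b::complex_vector \<Rightarrow> real) \<Rightarrow> bool" where
  "seminorm p \<longleftrightarrow> (\<forall>x y. p (x + y) \<le> p x + p y) \<and> (\<forall>c x. p (scaleC c x) = cmod c * p x)"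

definition lc_topology :: "('b::complex_vector \<Rightarrow> real) set \<Rightarrow> 'b topology" where
  "lc_topology P = topology (\<lambda>U. \<forall>y\<in>U. \<exists>F. finite F \<and> F \<subseteq> P \<and>
       (\<exists>e>0. {z. \<forall>p\<in>F. p (z - y) < e} \<subseteq> U))"

definition seq_complete_lcs :: "('b::complex_vector \<Rightarrow> real) set \<Rightarrow> bool" where
  "seq_complete_lcs P \<longleftrightarrow>
     (\<forall>s::nat \<Rightarrow> 'b. (\<forall>p\<in>P. \<forall>e>0. \<exists>N. \<forall>m\<ge>N. \<forall>n\<ge>N. p (s m - s n) < e)
        \<longrightarrow> (\<exists>y. limitin (lc_topology P) s y sequentially))"

definition sc_hausdorff_lcs :: "('b::complex_vector \<Rightarrow> real) set \<Rightarrow> bool" where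
  "sc_hausdorff_lcs P \<longleftrightarrow> (\<forall>p\<in>P. seminorm p) \<and> Hausdorff_space (lc_topology P)
     \<and> seq_complete_lcs P"

definition lc_dual :: "('b::complex_vector \<Rightarrow> real) set \<Rightarrow> ('b \<Rightarrow> complex) set" where
  "lc_dual P = {\<phi>. (\<forall>x y. \<phi> (x + y) = \<phi> x + \<phi> y) \<and> (\<forall>c x. \<phi> (scaleC c x) = c * \<phi> x)
                  \<and> continuous_map (lc_topology P) euclidean \<phi>}"

definition closed_convex_hull :: "('b::complex_vector \<Rightarrow> real) set \<Rightarrow> 'b set \<Rightarrow> 'b set" where
  "closed_convex_hull P S = (lc_topology P) closure_of (convex hull S)"

text \<open>A is 1-open iff its trace on every complex affine line
 L = {a + l v | l} (v \<noteq> 0) is open in L; L carries the topology transported from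
 the complex plane by the parametrisation l \<mapsto> a + l v.\<close>

definition one_open :: "'a::complex_vector set \<Rightarrow> bool" where
  "one_open A \<longleftrightarrow> (\<forall>a v. v \<noteq> 0 \<longrightarrow> open {l::complex. a + scaleC l v \<in> A})"

definition HG :: "('b::complex_vector \<Rightarrow> real) set \<Rightarrow> 'a::complex_vector set \<Rightarrow> ('a \<Rightarrow> 'b) set" where
  "HG P \<Omega> = {f. \<forall>a\<in>\<Omega>. \<forall>v. \<forall>\<phi>\<in>lc_dual P. \<exists>r>0. (\<forall>l\<in>ball 0 r. a + scaleC l v \<in> \<Omega>) \<and>
                 (\<lambda>l. \<phi> (f (a + scaleC l v))) holomorphic_on ball 0 r}"

text \<open>Scalar-valued case Y = C (the dual of C consists of the maps z \<mapsto> c z).\<close>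

definition HG_scalar :: "'a::complex_vector set \<Rightarrow> ('a \<Rightarrow> complex) set" where
  "HG_scalar \<Omega> = {h. \<forall>a\<in>\<Omega>. \<forall>v. \<exists>r>0. (\<forall>l\<in>ball 0 r. a + scaleC l v \<in> \<Omega>) \<and>
                 (\<lambda>l. h (a + scaleC l v)) holomorphic_on ball 0 r}"

definition is_ext :: "('b::complex_vector \<Rightarrow> real) set \<Rightarrow> 'a::complex_vector set \<Rightarrow> 'a set
    \<Rightarrow> ('a \<Rightarrow> 'b) \<Rightarrow> ('a \<Rightarrow> 'b) \<Rightarrow> bool" where
  "is_ext P \<Omega> C f F \<longleftrightarrow> F \<in> HG P \<Omega> \<and> (\<forall>x\<in>C. F x = f x)"

definition is_ext_scalar :: "'a::complex_vector set \<Rightarrow> 'a set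
    \<Rightarrow> ('a \<Rightarrow> complex) \<Rightarrow> ('a \<Rightarrow> complex) \<Rightarrow> bool" where
  "is_ext_scalar \<Omega> C h H \<longleftrightarrow> H \<in> HG_scalar \<Omega> \<and> (\<forall>x\<in>C. H x = h x)"

definition unique_ext_property :: "('b::complex_vector \<Rightarrow> real) set \<Rightarrow> 'a::complex_vector set
    \<Rightarrow> 'a set \<Rightarrow> 'a set \<Rightarrow> bool" where
  "unique_ext_property P \<Omega>0 \<Omega> C \<longleftrightarrow>
     (\<forall>f\<in>HG P \<Omega>0. \<exists>F. is_ext P \<Omega> C f F \<and> (\<forall>F'. is_ext P \<Omega> C f F' \<longrightarrow> (\<forall>x\<in>\<Omega>. F' x = F x)))"

definition invertibles :: "'c::ring_1 set" where
  "invertibles = {y. \<exists>z. y * z = 1 \<and> z * y = 1}"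

end

(*
  For a scalar h and a fixed y \<noteq> 0, extend the vector-valued map h y and read the
  extension off with a continuous functional \<phi> with \<phi> y \<noteq> 0 (Hahn-Banach).  If a value
  w = H x0 of the extension were missed by h, then 1 / (h - w) would extend to some G, and
  (H - w) G and 1 would both extend the constant 1, which fails at x0.  A point F x0 outside
  the closed convex hull of f (\<Omega>0) is separated from it by a functional \<phi>; then \<phi> \<circ> F extends
  \<phi> \<circ> f, so \<phi> (F x0) is a value of \<phi> \<circ> f, a contradiction.

  In a Banach algebra the Gateaux holomorphy defined through functionals is strong:
  on a line, weak holomorphy gives local boundedness (uniform boundedness principle), and
  Cauchy's estimates make the difference quotients Cauchy in norm (Dunford).  Strong
  holomorphy is stable under products and pointwise inverses; so if f has invertible values,
  its pointwise inverse g extends to some G, and F G, G F and 1 all extend the constant 1.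
*)

theory Submission
  imports Defs "HOL-Complex_Analysis.Complex_Analysis"
begin

section \<open>Sublinear functionals and the Hahn-Banach theorem\<close>

definition sublinear :: "('b::real_vector \<Rightarrow> real) \<Rightarrow> bool" where
  "sublinear s \<longleftrightarrow> (\<forall>x y. s (x + y) \<le> s x + s y) \<and> (\<forall>t x. t \<ge> 0 \<longrightarrow> s (t *\<^sub>R x) = t * s x)"

lemma sublinear_add_le: "sublinear s \<Longrightarrow> s (x + y) \<le> s x + s y"
  unfolding sublinear_def by blast

lemma sublinear_scaleR: "sublinear s \<Longrightarrow> t \<ge> 0 \<Longrightarrow> s (t *\<^sub>R x) = t * s x"
  unfolding sublinear_def by blast

lemma sublinear_zero: "sublinear s \<Longrightarrow> s 0 = 0"
  using sublinear_scaleR[of s 0 0] by simp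

lemma sublinear_minus_le: "sublinear s \<Longrightarrow> - s (- x) \<le> s x"
  using sublinear_add_le[of s x "- x"] sublinear_zero[of s] by simp

lemma sublinearI:
  fixes s :: "'b::real_vector \<Rightarrow> real"
  assumes add: "\<And>x y. s (x + y) \<le> s x + s y" and zero: "s 0 = 0"
    and hom: "\<And>t x. t > 0 \<Longrightarrow> s (t *\<^sub>R x) \<le> t * s x"
  shows "sublinear s"
  unfolding sublinear_def
proof (intro conjI allI impI add)
  fix t :: real and x :: 'b assume "t \<ge> 0"
  show "s (t *\<^sub>R x) = t * s x"
  proof (cases "t = 0")
    case False
    with \<open>t \<ge> 0\<close> have t: "t > 0" by simp
    have "s x = s (inverse t *\<^sub>R (t *\<^sub>R x))" using t by simp
    also have "\<dots> \<le> inverse t * s (t *\<^sub>R x)" using t by (intro hom) simp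
    finally have "t * s x \<le> s (t *\<^sub>R x)" using t by (simp add: field_simps)
    with hom[OF t, of x] show ?thesis by simp
  qed (simp add: zero)
qed

lemma sublinear_INF_chain:
  fixes \<rho> :: "'b::real_vector \<Rightarrow> real"
  assumes ne: "\<Sigma> \<noteq> {}" and sub: "\<And>\<sigma>. \<sigma> \<in> \<Sigma> \<Longrightarrow> sublinear \<sigma> \<and> \<sigma> \<le> \<rho>"
    and chain: "\<And>\<sigma>1 \<sigma>2. \<sigma>1 \<in> \<Sigma> \<Longrightarrow> \<sigma>2 \<in> \<Sigma> \<Longrightarrow> \<sigma>1 \<le> \<sigma>2 \<or> \<sigma>2 \<le> \<sigma>1"
  defines "\<tau> \<equiv> \<lambda>x. INF \<sigma>\<in>\<Sigma>. \<sigma> x"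
  shows "sublinear \<tau>" and "\<And>\<sigma>. \<sigma> \<in> \<Sigma> \<Longrightarrow> \<tau> \<le> \<sigma>"
proof -
  have bdd: "bdd_below ((\<lambda>\<sigma>. \<sigma> x) ` \<Sigma>)" for x
  proof (rule bdd_belowI2)
    fix \<sigma> assume "\<sigma> \<in> \<Sigma>"
    with sub have "- \<rho> (- x) \<le> - \<sigma> (- x)" "- \<sigma> (- x) \<le> \<sigma> x"
      by (auto simp: le_fun_def sublinear_minus_le)
    then show "- \<rho> (- x) \<le> \<sigma> x" by linarith
  qed
  have \<tau>_le: "\<tau> x \<le> \<sigma> x" if "\<sigma> \<in> \<Sigma>" for \<sigma> x
    unfolding \<tau>_def using bdd that by (rule cINF_lower)
  have le_\<tau>: "c \<le> \<tau> x" if "\<And>\<sigma>. \<sigma> \<in> \<Sigma> \<Longrightarrow> c \<le> \<sigma> x" for c x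
    unfolding \<tau>_def using ne that by (simp add: cINF_greatest)
  show "\<tau> \<le> \<sigma>" if "\<sigma> \<in> \<Sigma>" for \<sigma>
    using \<tau>_le that by (simp add: le_fun_def)
  show "sublinear \<tau>"
  proof (rule sublinearI)
    fix x y
    have "\<tau> (x + y) \<le> \<sigma>1 x + \<sigma>2 y" if \<sigma>12: "\<sigma>1 \<in> \<Sigma>" "\<sigma>2 \<in> \<Sigma>" for \<sigma>1 \<sigma>2
    proof -
      obtain \<sigma> where "\<sigma> \<in> \<Sigma>" "\<sigma> \<le> \<sigma>1" "\<sigma> \<le> \<sigma>2"
        using chain[OF \<sigma>12] \<sigma>12 by blast
      then have "\<sigma> x \<le> \<sigma>1 x" "\<sigma> y \<le> \<sigma>2 y" by (auto simp: le_fun_def)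
      moreover have "\<tau> (x + y) \<le> \<sigma> x + \<sigma> y"
        using \<tau>_le[OF \<open>\<sigma> \<in> \<Sigma>\<close>, of "x + y"] sub[OF \<open>\<sigma> \<in> \<Sigma>\<close>] sublinear_add_le[of \<sigma> x y]
        by linarith
      ultimately show ?thesis by linarith
    qed
    then have "\<tau> (x + y) - \<sigma>2 y \<le> \<tau> x" if "\<sigma>2 \<in> \<Sigma>" for \<sigma>2
      using that by (intro le_\<tau>) (simp add: algebra_simps)
    then have "\<tau> (x + y) - \<tau> x \<le> \<tau> y" by (intro le_\<tau>) (simp add: algebra_simps)
    then show "\<tau> (x + y) \<le> \<tau> x + \<tau> y" by simp
  next
    obtain \<sigma>0 where "\<sigma>0 \<in> \<Sigma>" using ne by blast
    then show "\<tau> 0 = 0"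
      using \<tau>_le[of \<sigma>0 0] le_\<tau>[of 0 0] sub by (force simp: sublinear_zero)
  next
    fix t :: real and x assume t: "t > 0"
    have "\<tau> (t *\<^sub>R x) / t \<le> \<tau> x"
    proof (rule le_\<tau>)
      fix \<sigma> assume "\<sigma> \<in> \<Sigma>"
      then have "\<tau> (t *\<^sub>R x) \<le> t * \<sigma> x"
        using \<tau>_le[of \<sigma> "t *\<^sub>R x"] sub t by (simp add: sublinear_scaleR)
      then show "\<tau> (t *\<^sub>R x) / t \<le> \<sigma> x" using t by (simp add: divide_le_eq mult.commute)
    qed
    then show "\<tau> (t *\<^sub>R x) \<le> t * \<tau> x" using t by (simp add: divide_le_eq mult.commute)
  qed
qed

lemma exists_minimal_sublinear_below:
  fixes \<rho> :: "'b::real_vector \<Rightarrow> real"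
  assumes "sublinear \<rho>"
  shows "\<exists>\<sigma>. sublinear \<sigma> \<and> \<sigma> \<le> \<rho> \<and> (\<forall>\<sigma>'. sublinear \<sigma>' \<and> \<sigma>' \<le> \<sigma> \<longrightarrow> \<sigma>' = \<sigma>)"
proof -
  define A where "A = {\<sigma>. sublinear \<sigma> \<and> \<sigma> \<le> \<rho>}"
  have "\<exists>\<sigma>\<in>A. \<forall>\<sigma>'\<in>A. \<sigma>' \<le> \<sigma> \<longrightarrow> \<sigma>' = \<sigma>"
  proof (rule predicate_Zorn)
    show "partial_order_on A (relation_of (\<lambda>\<sigma> \<sigma>'. \<sigma>' \<le> \<sigma>) A)"
      by (auto simp: partial_order_on_def preorder_on_def refl_on_def trans_on_def antisym_on_def
          relation_of_def)
  next
    fix \<C> assume C: "\<C> \<in> Chains (relation_of (\<lambda>\<sigma> \<sigma>'. \<sigma>' \<le> \<sigma>) A)"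
    then have CA: "\<C> \<subseteq> A" by (rule Chains_relation_of)
    show "\<exists>\<tau>\<in>A. \<forall>\<sigma>\<in>\<C>. \<tau> \<le> \<sigma>"
    proof (cases "\<C> = {}")
      case True
      then show ?thesis using assms by (auto simp: A_def)
    next
      case False
      have chain: "\<sigma>1 \<le> \<sigma>2 \<or> \<sigma>2 \<le> \<sigma>1" if "\<sigma>1 \<in> \<C>" "\<sigma>2 \<in> \<C>" for \<sigma>1 \<sigma>2
        using C that unfolding Chains_def relation_of_def by blast
      have sub: "sublinear \<sigma> \<and> \<sigma> \<le> \<rho>" if "\<sigma> \<in> \<C>" for \<sigma>
        using CA that by (auto simp: A_def)
      note inf = sublinear_INF_chain[OF False sub chain]
      obtain \<sigma>0 where "\<sigma>0 \<in> \<C>" using False by blast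
      then have "(\<lambda>x. INF \<sigma>\<in>\<C>. \<sigma> x) \<le> \<rho>"
        using inf(2) sub order_trans by blast
      then show ?thesis using inf by (auto simp: A_def)
    qed
  qed
  then show ?thesis by (auto simp: A_def)
qed

lemma convex_cone_add:
  assumes "convex K" "l1 \<ge> 0" "l2 \<ge> 0" "k1 \<in> K" "k2 \<in> K"
  obtains k where "k \<in> K" "l1 *\<^sub>R k1 + l2 *\<^sub>R k2 = (l1 + l2) *\<^sub>R k"
proof (cases "l1 + l2 = 0")
  case True
  with assms(2,3) have "l1 = 0" "l2 = 0" by auto
  with assms(4) that show ?thesis by auto
next
  case False
  with assms(2,3) have "l1 + l2 > 0" by auto
  define k where "k = (l1 / (l1 + l2)) *\<^sub>R k1 + (l2 / (l1 + l2)) *\<^sub>R k2"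
  have "k \<in> K" unfolding k_def using assms \<open>l1 + l2 > 0\<close>
    by (intro convexD) (auto simp: add_divide_distrib[symmetric])
  moreover have "l1 *\<^sub>R k1 + l2 *\<^sub>R k2 = (l1 + l2) *\<^sub>R k"
    unfolding k_def using \<open>l1 + l2 > 0\<close> by (simp add: scaleR_add_right)
  ultimately show ?thesis by (rule that)
qed

text \<open>Pushing \<open>q\<close> down along the cone spanned by \<open>K\<close>: the single construction behind both the
  linearity of minimal sublinear functionals and the separation of convex sets.\<close>

lemma sublinear_cone_INF:
  fixes q :: "'b::real_vector \<Rightarrow> real"
  assumes q: "sublinear q" and K: "convex K" "K \<noteq> {}" and c: "\<And>k. k \<in> K \<Longrightarrow> c \<le> q k"
  defines "\<rho> \<equiv> \<lambda>z. INF (l, k)\<in>{0..} \<times> K. q (z + l *\<^sub>R k) - l * c"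
  shows "sublinear \<rho>" and "\<And>z l k. l \<ge> 0 \<Longrightarrow> k \<in> K \<Longrightarrow> \<rho> z \<le> q (z + l *\<^sub>R k) - l * c"
proof -
  have bdd: "bdd_below ((\<lambda>(l, k). q (z + l *\<^sub>R k) - l * c) ` ({0..} \<times> K))" for z
  proof (rule bdd_belowI2, clarify)
    fix l :: real and k assume "0 \<le> l" "k \<in> K"
    then have "l * c \<le> q (l *\<^sub>R k)"
      using c sublinear_scaleR[OF q] by (simp add: mult_left_mono)
    also have "\<dots> \<le> q (z + l *\<^sub>R k) + q (- z)"
      using sublinear_add_le[OF q, of "z + l *\<^sub>R k" "- z"] by simp
    finally show "- q (- z) \<le> q (z + l *\<^sub>R k) - l * c" by simp
  qed
  show \<rho>_le: "\<rho> z \<le> q (z + l *\<^sub>R k) - l * c" if "l \<ge> 0" "k \<in> K" for z l k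
    unfolding \<rho>_def using cINF_lower[OF bdd, of "(l, k)" z] that by simp
  have le_\<rho>: "d \<le> \<rho> z" if "\<And>l k. l \<ge> 0 \<Longrightarrow> k \<in> K \<Longrightarrow> d \<le> q (z + l *\<^sub>R k) - l * c" for d z
    unfolding \<rho>_def using K(2) that by (intro cINF_greatest) auto
  obtain k0 where k0: "k0 \<in> K" using K(2) by blast
  show "sublinear \<rho>"
  proof (rule sublinearI)
    fix z1 z2
    have "\<rho> (z1 + z2) \<le> (q (z1 + l1 *\<^sub>R k1) - l1 * c) + (q (z2 + l2 *\<^sub>R k2) - l2 * c)"
      if l: "l1 \<ge> 0" "l2 \<ge> 0" and k: "k1 \<in> K" "k2 \<in> K" for l1 k1 l2 k2
    proof -
      obtain k where "k \<in> K" and "l1 *\<^sub>R k1 + l2 *\<^sub>R k2 = (l1 + l2) *\<^sub>R k"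
        using convex_cone_add[OF K(1) l k] .
      then have "z1 + z2 + (l1 + l2) *\<^sub>R k = (z1 + l1 *\<^sub>R k1) + (z2 + l2 *\<^sub>R k2)"
        by (simp add: algebra_simps)
      then show ?thesis
        using \<rho>_le[of "l1 + l2" k "z1 + z2"] l \<open>k \<in> K\<close>
          sublinear_add_le[OF q, of "z1 + l1 *\<^sub>R k1" "z2 + l2 *\<^sub>R k2"]
        by (simp add: algebra_simps)
    qed
    then have "\<rho> (z1 + z2) - (q (z2 + l2 *\<^sub>R k2) - l2 * c) \<le> \<rho> z1" if "l2 \<ge> 0" "k2 \<in> K" for l2 k2
      using that by (intro le_\<rho>) (smt (verit))
    then have "\<rho> (z1 + z2) - \<rho> z1 \<le> \<rho> z2" by (intro le_\<rho>) (smt (verit))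
    then show "\<rho> (z1 + z2) \<le> \<rho> z1 + \<rho> z2" by simp
  next
    have "0 \<le> q (l *\<^sub>R k) - l * c" if "l \<ge> 0" "k \<in> K" for l k
      using that c sublinear_scaleR[OF q] by (simp add: mult_left_mono)
    then show "\<rho> 0 = 0"
      using \<rho>_le[OF order_refl k0, of 0] sublinear_zero[OF q] by (intro antisym le_\<rho>) auto
  next
    fix t :: real and z assume t: "t > 0"
    have "\<rho> (t *\<^sub>R z) / t \<le> \<rho> z"
    proof (rule le_\<rho>)
      fix l k assume "l \<ge> (0::real)" "k \<in> K"
      then have "\<rho> (t *\<^sub>R z) \<le> q (t *\<^sub>R (z + l *\<^sub>R k)) - (t * l) * c"
        using \<rho>_le[of "t * l" k "t *\<^sub>R z"] t by (simp add: scaleR_add_right)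
      also have "\<dots> = t * (q (z + l *\<^sub>R k) - l * c)"
        using sublinear_scaleR[OF q, of t "z + l *\<^sub>R k"] t by (simp add: algebra_simps)
      finally show "\<rho> (t *\<^sub>R z) / t \<le> q (z + l *\<^sub>R k) - l * c"
        using t by (simp add: divide_le_eq mult.commute)
    qed
    then show "\<rho> (t *\<^sub>R z) \<le> t * \<rho> z" using t by (simp add: divide_le_eq mult.commute)
  qed
qed

lemma minimal_sublinear_imp_linear:
  fixes \<sigma> :: "'b::real_vector \<Rightarrow> real"
  assumes \<sigma>: "sublinear \<sigma>" and min: "\<And>\<sigma>'. sublinear \<sigma>' \<Longrightarrow> \<sigma>' \<le> \<sigma> \<Longrightarrow> \<sigma>' = \<sigma>"
  shows "linear \<sigma>"
proof -
  have superadd: "\<sigma> x + \<sigma> y \<le> \<sigma> (x + y)" for x y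
  proof -
    \<comment> \<open>the cone construction along \<open>y\<close> gives a sublinear minorant of \<open>\<sigma>\<close>, hence \<open>\<sigma>\<close> itself\<close>
    define \<rho> where "\<rho> z = (INF (l, k)\<in>{0..} \<times> {y}. \<sigma> (z + l *\<^sub>R k) - l * \<sigma> y)" for z
    note cone = sublinear_cone_INF[where K="{y}" and c="\<sigma> y", OF \<sigma> convex_singleton, folded \<rho>_def]
    have "\<rho> \<le> \<sigma>" using cone(2)[where l=0 and k=y] by (simp add: le_fun_def)
    then have "\<rho> = \<sigma>" using min cone(1) by simp
    then show ?thesis using cone(2)[where l=1 and k=y and z=x] by simp
  qed
  have add: "\<sigma> (x + y) = \<sigma> x + \<sigma> y" for x y
    using superadd[of x y] sublinear_add_le[OF \<sigma>, of x y] by simp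
  have "\<sigma> (- x) = - \<sigma> x" for x
    using add[of x "- x"] sublinear_zero[OF \<sigma>] by simp
  then have "\<sigma> (t *\<^sub>R x) = t * \<sigma> x" for t x
    using sublinear_scaleR[OF \<sigma>, of t x] sublinear_scaleR[OF \<sigma>, of "- t" x]
    by (cases "t \<ge> 0") auto
  with add show ?thesis by (intro linearI) auto
qed

theorem Hahn_Banach_sublinear:
  fixes \<rho> :: "'b::real_vector \<Rightarrow> real"
  assumes "sublinear \<rho>"
  shows "\<exists>\<psi>. linear \<psi> \<and> \<psi> \<le> \<rho>"
  using exists_minimal_sublinear_below[OF assms] minimal_sublinear_imp_linear by blast

lemma linear_functional_separating_convex:
  fixes q :: "'b::real_vector \<Rightarrow> real"
  assumes q: "sublinear q" and K: "convex K" "K \<noteq> {}" and qK: "\<And>k. k \<in> K \<Longrightarrow> 1 \<le> q k"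
  shows "\<exists>\<psi>. linear \<psi> \<and> \<psi> \<le> q \<and> (\<forall>k\<in>K. 1 \<le> \<psi> k)"
proof -
  define \<rho> where "\<rho> z = (INF (l, k)\<in>{0..} \<times> K. q (z + l *\<^sub>R k) - l * 1)" for z
  note cone = sublinear_cone_INF[OF q K(1) K(2) qK, folded \<rho>_def]
  obtain \<psi> where \<psi>: "linear \<psi>" "\<psi> \<le> \<rho>" using Hahn_Banach_sublinear[OF cone(1)] by blast
  obtain k0 where "k0 \<in> K" using K(2) by blast
  then have "\<rho> z \<le> q z" for z using cone(2)[of 0 k0 z] by simp
  with \<psi>(2) have "\<psi> \<le> q" unfolding le_fun_def using order_trans by blast
  moreover have "1 \<le> \<psi> k" if "k \<in> K" for k
  proof -
    have "\<psi> (- k) \<le> \<rho> (- k)" using \<psi>(2) by (simp add: le_fun_def)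
    also have "\<dots> \<le> - 1" using cone(2)[of 1 k "- k"] that sublinear_zero[OF q] by simp
    finally show ?thesis using linear_neg[OF \<psi>(1)] by simp
  qed
  ultimately show ?thesis using \<psi>(1) by blast
qed

lemma scaleC_zero_left [simp]: "scaleC 0 (x::'a::complex_vector) = 0"
  by (metis scaleR_scaleC scaleR_zero_left of_real_0)

lemma scaleC_zero_right [simp]: "scaleC c (0::'a::complex_vector) = 0"
  by (metis scaleC_add_right add_cancel_right_right add.right_neutral)

lemma scaleC_minus_right: "scaleC c (- x) = - scaleC c (x::'a::complex_vector)"
  by (metis scaleC_add_right scaleC_zero_right add.right_inverse eq_neg_iff_add_eq_0)

lemma scaleC_minus_left: "scaleC (- c) x = - scaleC c (x::'a::complex_vector)"
  by (metis scaleC_add_left scaleC_zero_left add.right_inverse eq_neg_iff_add_eq_0)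

lemma scaleC_Re_Im: "scaleC c (z::'a::complex_vector) = Re c *\<^sub>R z + Im c *\<^sub>R scaleC \<i> z"
proof -
  have "c = of_real (Re c) + of_real (Im c) * \<i>" by (simp add: complex_eq_iff)
  then have "scaleC c z = scaleC (of_real (Re c)) z + scaleC (of_real (Im c) * \<i>) z"
    by (metis scaleC_add_left)
  then show ?thesis by (simp add: scaleR_scaleC scaleC_scaleC)
qed

definition complexify :: "('b::complex_vector \<Rightarrow> real) \<Rightarrow> 'b \<Rightarrow> complex" where
  "complexify \<psi> z = complex_of_real (\<psi> z) - \<i> * complex_of_real (\<psi> (scaleC \<i> z))"

lemma Re_complexify [simp]: "Re (complexify \<psi> z) = \<psi> z"
  by (simp add: complexify_def)

lemma complexify_add: "linear \<psi> \<Longrightarrow> complexify \<psi> (x + y) = complexify \<psi> x + complexify \<psi> y"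
  by (simp add: complexify_def linear_add scaleC_add_right)

lemma complexify_scaleC:
  assumes "linear \<psi>" shows "complexify \<psi> (scaleC c z) = c * complexify \<psi> z"
proof -
  have l: "\<psi> (a *\<^sub>R x + b *\<^sub>R y) = a * \<psi> x + b * \<psi> y" for a b x y
    using assms by (simp add: linear_add linear_scale)
  have "scaleC \<i> (scaleC \<i> z) = - z"
    by (simp add: scaleC_scaleC scaleC_minus_left scaleC_one)
  then have "scaleC \<i> (scaleC c z) = Re c *\<^sub>R scaleC \<i> z + Im c *\<^sub>R (- z)"
    by (metis scaleC_Re_Im scaleC_scaleC mult.commute)
  then have "\<psi> (scaleC \<i> (scaleC c z)) = Re c * \<psi> (scaleC \<i> z) - Im c * \<psi> z"
    by (simp add: linear_diff[OF assms] linear_scale[OF assms])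
  moreover have "\<psi> (scaleC c z) = Re c * \<psi> z + Im c * \<psi> (scaleC \<i> z)"
    by (subst scaleC_Re_Im) (simp add: l)
  ultimately show ?thesis unfolding complexify_def by (simp add: complex_eq_iff algebra_simps)
qed

lemma complexify_diff: "linear \<psi> \<Longrightarrow> complexify \<psi> (x - y) = complexify \<psi> x - complexify \<psi> y"
  by (metis add_diff_cancel complexify_add diff_add_cancel)

lemma norm_complexify_le: "cmod (complexify \<psi> z) \<le> \<bar>\<psi> z\<bar> + \<bar>\<psi> (scaleC \<i> z)\<bar>"
  using cmod_le[of "complexify \<psi> z"] by (simp add: complexify_def)

lemma seminorm_scaleC: "seminorm p \<Longrightarrow> p (scaleC c x) = cmod c * p x"
  unfolding seminorm_def by blast

lemma seminorm_add: "seminorm p \<Longrightarrow> p (x + y) \<le> p x + p y"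
  unfolding seminorm_def by blast

lemma seminorm_minus: "seminorm p \<Longrightarrow> p (- x) = p x"
  using seminorm_scaleC[of p "-1" x] by (simp add: scaleC_minus_left scaleC_one)

lemma seminorm_scaleR: "seminorm p \<Longrightarrow> p (t *\<^sub>R x) = \<bar>t\<bar> * p x"
  by (simp add: seminorm_scaleC scaleR_scaleC)

lemma seminorm_nonneg: "seminorm p \<Longrightarrow> 0 \<le> p x"
  using seminorm_add[of p x "- x"] seminorm_minus[of p x] seminorm_scaleR[of p 0 x] by simp

lemma sublinear_sum_seminorms:
  assumes "\<And>p. p \<in> F \<Longrightarrow> seminorm p" and "e > 0"
  shows "sublinear (\<lambda>z. (\<Sum>p\<in>F. p z) / e)"
  unfolding sublinear_def
proof (intro conjI allI impI)
  fix x y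
  have "(\<Sum>p\<in>F. p (x + y)) \<le> (\<Sum>p\<in>F. p x + p y)" by (intro sum_mono seminorm_add assms)
  then show "(\<Sum>p\<in>F. p (x + y)) / e \<le> (\<Sum>p\<in>F. p x) / e + (\<Sum>p\<in>F. p y) / e"
    using \<open>e > 0\<close> by (simp add: sum.distrib add_divide_distrib[symmetric] divide_right_mono)
next
  fix t :: real and x assume "t \<ge> 0"
  then show "(\<Sum>p\<in>F. p (t *\<^sub>R x)) / e = t * ((\<Sum>p\<in>F. p x) / e)"
    by (simp add: seminorm_scaleR assms sum_distrib_left)
qed

lemma istopology_lc:
  fixes P :: "('b::complex_vector \<Rightarrow> real) set"
  shows "istopology (\<lambda>U. \<forall>y\<in>U. \<exists>F. finite F \<and> F \<subseteq> P \<and>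
       (\<exists>e>0. {z. \<forall>p\<in>F. p (z - y) < e} \<subseteq> U))"
  unfolding istopology_def
proof (intro conjI allI impI)
  fix S T :: "'b set"
  assume S: "\<forall>y\<in>S. \<exists>F. finite F \<and> F \<subseteq> P \<and> (\<exists>e>0. {z. \<forall>p\<in>F. p (z - y) < e} \<subseteq> S)"
     and T: "\<forall>y\<in>T. \<exists>F. finite F \<and> F \<subseteq> P \<and> (\<exists>e>0. {z. \<forall>p\<in>F. p (z - y) < e} \<subseteq> T)"
  show "\<forall>y\<in>S \<inter> T. \<exists>F. finite F \<and> F \<subseteq> P \<and> (\<exists>e>0. {z. \<forall>p\<in>F. p (z - y) < e} \<subseteq> S \<inter> T)"
  proof
    fix y assume y: "y \<in> S \<inter> T"
    from y S obtain F1 e1 where 1: "finite F1" "F1 \<subseteq> P" "e1 > 0" "{z. \<forall>p\<in>F1. p (z - y) < e1} \<subseteq> S"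
      by (meson IntD1)
    from y T obtain F2 e2 where 2: "finite F2" "F2 \<subseteq> P" "e2 > 0" "{z. \<forall>p\<in>F2. p (z - y) < e2} \<subseteq> T"
      by (meson IntD2)
    have "{z. \<forall>p\<in>F1 \<union> F2. p (z - y) < min e1 e2} \<subseteq> S \<inter> T"
    proof
      fix z assume "z \<in> {z. \<forall>p\<in>F1 \<union> F2. p (z - y) < min e1 e2}"
      then have "z \<in> {z. \<forall>p\<in>F1. p (z - y) < e1}" "z \<in> {z. \<forall>p\<in>F2. p (z - y) < e2}" by auto
      then show "z \<in> S \<inter> T" using 1(4) 2(4) by blast
    qed
    then show "\<exists>F. finite F \<and> F \<subseteq> P \<and> (\<exists>e>0. {z. \<forall>p\<in>F. p (z - y) < e} \<subseteq> S \<inter> T)"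
      using 1 2 by (intro exI[of _ "F1 \<union> F2"]) (auto intro!: exI[of _ "min e1 e2"])
  qed
next
  fix K :: "'b set set"
  assume "Ball K (\<lambda>U. \<forall>y\<in>U. \<exists>F. finite F \<and> F \<subseteq> P \<and> (\<exists>e>0. {z. \<forall>p\<in>F. p (z - y) < e} \<subseteq> U))"
  then show "\<forall>y\<in>\<Union>K. \<exists>F. finite F \<and> F \<subseteq> P \<and> (\<exists>e>0. {z. \<forall>p\<in>F. p (z - y) < e} \<subseteq> \<Union>K)"
  proof (intro ballI)
    fix y assume h: "Ball K (\<lambda>U. \<forall>y\<in>U. \<exists>F. finite F \<and> F \<subseteq> P \<and> (\<exists>e>0. {z. \<forall>p\<in>F. p (z - y) < e} \<subseteq> U))"
      and "y \<in> \<Union>K"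
    then obtain U where U: "U \<in> K" "y \<in> U" by blast
    with h obtain F e where "finite F" "F \<subseteq> P" "e > 0" "{z. \<forall>p\<in>F. p (z - y) < e} \<subseteq> U" by meson
    moreover have "U \<subseteq> \<Union>K" using U by blast
    ultimately show "\<exists>F. finite F \<and> F \<subseteq> P \<and> (\<exists>e>0. {z. \<forall>p\<in>F. p (z - y) < e} \<subseteq> \<Union>K)"
      by (meson subset_trans)
  qed
qed

lemma openin_lc_topology:
  "openin (lc_topology P) U \<longleftrightarrow>
     (\<forall>y\<in>U. \<exists>F. finite F \<and> F \<subseteq> P \<and> (\<exists>e>0. {z. \<forall>p\<in>F. p (z - y) < e} \<subseteq> U))"
  unfolding lc_topology_def using istopology_lc[of P] by simp

lemma openin_lc_topologyD:
  assumes "openin (lc_topology P) U" and "y \<in> U"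
  obtains F e where "finite F" "F \<subseteq> P" "e > 0" "{z. \<forall>p\<in>F. p (z - y) < e} \<subseteq> U"
proof -
  have "\<exists>F. finite F \<and> F \<subseteq> P \<and> (\<exists>e>0. {z. \<forall>p\<in>F. p (z - y) < e} \<subseteq> U)"
    using assms(1)[unfolded openin_lc_topology] assms(2) by (rule bspec)
  then show thesis using that by (elim exE conjE)
qed

lemma topspace_lc_topology [simp]: "topspace (lc_topology P) = UNIV"
proof -
  have "openin (lc_topology P) UNIV" unfolding openin_lc_topology
    by (intro ballI exI[of _ "{}"]) (auto intro: exI[of _ "1::real"])
  then show ?thesis by (metis openin_subset top.extremum_uniqueI)
qed

lemma continuous_map_lc_topology:
  fixes \<phi> :: "'b::complex_vector \<Rightarrow> complex"
  assumes P: "\<forall>p\<in>P. seminorm p" and F: "finite F" "F \<subseteq> P"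
    and diff: "\<And>x y. \<phi> (x - y) = \<phi> x - \<phi> y"
    and bound: "\<And>w. cmod (\<phi> w) \<le> B * (\<Sum>p\<in>F. p w)"
  shows "continuous_map (lc_topology P) euclidean \<phi>"
  unfolding continuous_map_def
proof (intro conjI allI impI)
  fix U :: "complex set" assume "openin euclidean U"
  then have U: "open U" by simp
  show "openin (lc_topology P) {x \<in> topspace (lc_topology P). \<phi> x \<in> U}"
    unfolding openin_lc_topology
  proof
    fix y assume "y \<in> {x \<in> topspace (lc_topology P). \<phi> x \<in> U}"
    then obtain \<epsilon> where \<epsilon>: "\<epsilon> > 0" "ball (\<phi> y) \<epsilon> \<subseteq> U" using U open_contains_ball by force
    define e where "e = \<epsilon> / ((\<bar>B\<bar> + 1) * (real (card F) + 1))"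
    have e: "e > 0" unfolding e_def using \<epsilon> by (simp add: add_pos_nonneg)
    have near: "\<phi> z \<in> U" if z: "\<forall>p\<in>F. p (z - y) < e" for z
    proof -
      have "(\<Sum>p\<in>F. p (z - y)) \<le> (\<Sum>p\<in>F. e)" using z by (intro sum_mono) (simp add: less_imp_le)
      then have sum_le: "(\<Sum>p\<in>F. p (z - y)) \<le> real (card F) * e" by simp
      have sum_nonneg: "0 \<le> (\<Sum>p\<in>F. p (z - y))"
        using P F by (intro sum_nonneg) (auto intro: seminorm_nonneg)
      have "cmod (\<phi> z - \<phi> y) \<le> B * (\<Sum>p\<in>F. p (z - y))"
        using bound[of "z - y"] diff by simp
      also have "\<dots> \<le> \<bar>B\<bar> * (\<Sum>p\<in>F. p (z - y))"
        using sum_nonneg by (intro mult_right_mono) auto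
      also have "\<dots> \<le> \<bar>B\<bar> * (real (card F) * e)" using sum_le by (simp add: mult_left_mono)
      also have "\<dots> < (\<bar>B\<bar> + 1) * (real (card F) + 1) * e"
        using e by (simp add: algebra_simps add_pos_nonneg)
      also have "\<dots> = \<epsilon>" unfolding e_def by (simp add: add_pos_nonneg)
      finally show ?thesis using \<epsilon>(2) by (auto simp: dist_norm norm_minus_commute)
    qed
    show "\<exists>F. finite F \<and> F \<subseteq> P \<and>
        (\<exists>e>0. {z. \<forall>p\<in>F. p (z - y) < e} \<subseteq> {x \<in> topspace (lc_topology P). \<phi> x \<in> U})"
      using near F e by (intro exI[of _ F] exI[of _ e]) auto
  qed
qed simp

lemma lc_dual_add: "\<phi> \<in> lc_dual P \<Longrightarrow> \<phi> (x + y) = \<phi> x + \<phi> y"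
  unfolding lc_dual_def by blast

lemma lc_dual_scaleC: "\<phi> \<in> lc_dual P \<Longrightarrow> \<phi> (scaleC c x) = c * \<phi> x"
  unfolding lc_dual_def by blast

lemma lc_dual_diff: "\<phi> \<in> lc_dual P \<Longrightarrow> \<phi> (x - y) = \<phi> x - \<phi> y"
  using lc_dual_add[of \<phi> P x "scaleC (-1) y"] lc_dual_scaleC[of \<phi> P "-1" y]
  by (simp add: scaleC_minus_left scaleC_one)

lemma complexify_in_lc_dual:
  assumes P: "\<forall>p\<in>P. seminorm p" and F: "finite F" "F \<subseteq> P"
    and \<psi>: "linear \<psi>" and bound: "\<And>w. \<bar>\<psi> w\<bar> \<le> B * (\<Sum>p\<in>F. p w)"
  shows "complexify \<psi> \<in> lc_dual P"
proof -
  have "cmod (complexify \<psi> w) \<le> (2 * B) * (\<Sum>p\<in>F. p w)" for w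
  proof -
    have "\<bar>\<psi> (scaleC \<i> w)\<bar> \<le> B * (\<Sum>p\<in>F. p w)"
      using bound[of "scaleC \<i> w"] F P by (simp add: seminorm_scaleC subset_iff)
    then have "cmod (complexify \<psi> w) \<le> B * (\<Sum>p\<in>F. p w) + B * (\<Sum>p\<in>F. p w)"
      using norm_complexify_le[of \<psi> w] bound[of w] by linarith
    then show ?thesis by simp
  qed
  then have "continuous_map (lc_topology P) euclidean (complexify \<psi>)"
    using continuous_map_lc_topology[OF P F complexify_diff[OF \<psi>]] by blast
  then show ?thesis
    unfolding lc_dual_def using complexify_add[OF \<psi>] complexify_scaleC[OF \<psi>] by blast
qed

lemma lc_dual_separating_convex:
  assumes P: "\<forall>p\<in>P. seminorm p" and F: "finite F" "F \<subseteq> P" and e: "e > 0"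
    and K: "convex K" "K \<noteq> {}" and Ke: "\<And>k. k \<in> K \<Longrightarrow> e \<le> (\<Sum>p\<in>F. p k)"
  shows "\<exists>\<phi>\<in>lc_dual P. \<forall>k\<in>K. 1 \<le> Re (\<phi> k)"
proof -
  define q where "q z = (\<Sum>p\<in>F. p z) / e" for z
  have sn: "seminorm p" if "p \<in> F" for p using P F that by blast
  have "sublinear q" unfolding q_def using sn e by (rule sublinear_sum_seminorms)
  moreover have "1 \<le> q k" if "k \<in> K" for k using Ke[OF that] e unfolding q_def by simp
  ultimately obtain \<psi> where \<psi>: "linear \<psi>" "\<psi> \<le> q" "\<forall>k\<in>K. 1 \<le> \<psi> k"
    using linear_functional_separating_convex[OF _ K] by blast
  have "\<bar>\<psi> w\<bar> \<le> (1 / e) * (\<Sum>p\<in>F. p w)" for w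
  proof -
    have "\<psi> w \<le> q w" "\<psi> (- w) \<le> q (- w)" using \<psi>(2) by (auto simp: le_fun_def)
    moreover have "q (- w) = q w" unfolding q_def by (simp add: seminorm_minus sn)
    ultimately show ?thesis using linear_neg[OF \<psi>(1), of w] unfolding q_def by auto
  qed
  then have "complexify \<psi> \<in> lc_dual P" by (rule complexify_in_lc_dual[OF P F \<psi>(1)])
  then show ?thesis using \<psi>(3) by (intro bexI[of _ "complexify \<psi>"]) auto
qed

lemma Hausdorff_lc_seminorm_nonzero:
  fixes P :: "('b::complex_vector \<Rightarrow> real) set"
  assumes "Hausdorff_space (lc_topology P)" and "y \<noteq> 0"
  shows "\<exists>p\<in>P. p y \<noteq> 0"
proof (rule ccontr)
  assume "\<not> ?thesis"
  then have all0: "\<And>p. p \<in> P \<Longrightarrow> p y = 0" by blast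
  obtain U V where UV: "openin (lc_topology P) U" "openin (lc_topology P) V" "0 \<in> U" "y \<in> V" "disjnt U V"
    using assms(1)[unfolded Hausdorff_space_def, rule_format, of 0 y] assms(2) by auto
  obtain F e where Fe: "finite F" "F \<subseteq> P" "e > 0" "{z. \<forall>p\<in>F. p (z - 0) < e} \<subseteq> U"
    by (rule openin_lc_topologyD[OF UV(1,3)])
  have "p y = 0" if "p \<in> F" for p using that Fe(2) all0 by blast
  then have "y \<in> {z. \<forall>p\<in>F. p (z - 0) < e}" using Fe(3) by force
  then have "y \<in> U" using Fe(4) by blast
  then show False using UV(4,5) by (auto simp: disjnt_def)
qed

lemma lc_dual_nonzero:
  assumes P: "\<forall>p\<in>P. seminorm p" and "Hausdorff_space (lc_topology P)" and "y \<noteq> 0"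
  shows "\<exists>\<phi>\<in>lc_dual P. \<phi> y \<noteq> 0"
proof -
  obtain p where "p \<in> P" "p y \<noteq> 0" using Hausdorff_lc_seminorm_nonzero assms(2,3) by blast
  then have "0 < p y" using P seminorm_nonneg by (metis less_eq_real_def)
  then obtain \<phi> where "\<phi> \<in> lc_dual P" "1 \<le> Re (\<phi> y)"
    using lc_dual_separating_convex[OF P, of "{p}" "p y" "{y}"] \<open>p \<in> P\<close> by auto
  then show ?thesis by (intro bexI[of _ \<phi>]) auto
qed

lemma lc_dual_separating_point_closed_convex_hull:
  assumes P: "\<forall>p\<in>P. seminorm p" and S: "S \<noteq> {}" and w: "w \<notin> closed_convex_hull P S"
  shows "\<exists>\<phi>\<in>lc_dual P. \<forall>s\<in>S. 1 \<le> Re (\<phi> s - \<phi> w)"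
proof -
  obtain T where T: "w \<in> T" "openin (lc_topology P) T" "T \<inter> convex hull S = {}"
    using w unfolding closed_convex_hull_def in_closure_of by auto
  obtain F e where Fe: "finite F" "F \<subseteq> P" "e > 0" "{z. \<forall>p\<in>F. p (z - w) < e} \<subseteq> T"
    by (rule openin_lc_topologyD[OF T(2,1)])
  define K where "K = (\<lambda>s. s - w) ` (convex hull S)"
  have "e \<le> (\<Sum>p\<in>F. p k)" if k: "k \<in> K" for k
  proof -
    obtain s where s: "s \<in> convex hull S" "k = s - w" using k unfolding K_def by blast
    have "s \<notin> {z. \<forall>p\<in>F. p (z - w) < e}" using T(3) Fe(4) s(1) by blast
    then obtain q where q: "q \<in> F" "e \<le> q k" using s(2) by (auto simp: not_less)
    have "q k \<le> (\<Sum>p\<in>F. p k)"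
      using Fe(1,2) P q(1) by (intro member_le_sum) (auto intro: seminorm_nonneg)
    then show ?thesis using q by simp
  qed
  moreover have "convex K" "K \<noteq> {}" unfolding K_def using S by (auto simp: convex_hull_eq_empty)
  ultimately obtain \<phi> where \<phi>: "\<phi> \<in> lc_dual P" "\<forall>k\<in>K. 1 \<le> Re (\<phi> k)"
    using lc_dual_separating_convex[OF P Fe(1,2,3)] by blast
  have "1 \<le> Re (\<phi> s - \<phi> w)" if "s \<in> S" for s
  proof -
    have "s - w \<in> K" unfolding K_def using that by (auto intro: hull_inc)
    then show ?thesis using \<phi>(2) lc_dual_diff[OF \<phi>(1), of s w] by auto
  qed
  then show ?thesis using \<phi>(1) by blast
qed

section \<open>Gateaux holomorphy along complex lines\<close>

definition line_trace :: "'a::complex_vector set \<Rightarrow> 'a \<Rightarrow> 'a \<Rightarrow> complex set" where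
  "line_trace \<Omega> a v = {l. a + scaleC l v \<in> \<Omega>}"

lemma open_line_trace: "one_open \<Omega> \<Longrightarrow> open (line_trace \<Omega> a v)"
  unfolding one_open_def line_trace_def
  by (cases "v = 0") (auto simp: if_distrib[of "\<lambda>A. open A"])

lemma holomorphic_along_lines_iff:
  fixes g :: "'a::complex_vector \<Rightarrow> complex"
  assumes \<Omega>: "one_open \<Omega>"
  shows "(\<forall>a\<in>\<Omega>. \<forall>v. \<exists>r>0. (\<forall>l\<in>ball 0 r. a + scaleC l v \<in> \<Omega>) \<and>
             (\<lambda>l. g (a + scaleC l v)) holomorphic_on ball 0 r)
         \<longleftrightarrow> (\<forall>a v. (\<lambda>l. g (a + scaleC l v)) holomorphic_on line_trace \<Omega> a v)"
proof (intro iffI allI ballI)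
  fix a v
  assume local: "\<forall>a\<in>\<Omega>. \<forall>v. \<exists>r>0. (\<forall>l\<in>ball 0 r. a + scaleC l v \<in> \<Omega>) \<and>
             (\<lambda>l. g (a + scaleC l v)) holomorphic_on ball 0 r"
  show "(\<lambda>l. g (a + scaleC l v)) holomorphic_on line_trace \<Omega> a v"
    unfolding holomorphic_on_open[OF open_line_trace[OF \<Omega>]]
  proof
    fix l0 assume "l0 \<in> line_trace \<Omega> a v"
    then obtain r where "r > 0" and hol: "(\<lambda>l. g (a + scaleC l0 v + scaleC l v)) holomorphic_on ball 0 r"
      using local unfolding line_trace_def by blast
    then obtain d where "((\<lambda>l. g (a + scaleC l0 v + scaleC l v)) has_field_derivative d) (at 0)"
      using holomorphic_on_imp_differentiable_at[of _ "ball 0 r"]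
      by (meson centre_in_ball field_differentiable_def open_ball)
    moreover have "a + scaleC l0 v + scaleC l v = a + scaleC (l + l0) v" for l
      by (simp add: scaleC_add_left algebra_simps)
    ultimately have "((\<lambda>l. g (a + scaleC (l + l0) v)) has_field_derivative d) (at 0)" by simp
    then show "\<exists>d. ((\<lambda>l. g (a + scaleC l v)) has_field_derivative d) (at l0)"
      using DERIV_shift[of "\<lambda>l. g (a + scaleC l v)" d 0 l0] by auto
  qed
next
  fix a v
  assume global: "\<forall>a v. (\<lambda>l. g (a + scaleC l v)) holomorphic_on line_trace \<Omega> a v" and "a \<in> \<Omega>"
  then have "0 \<in> line_trace \<Omega> a v" unfolding line_trace_def by simp
  then obtain r where "r > 0" "ball 0 r \<subseteq> line_trace \<Omega> a v"
    using open_line_trace[OF \<Omega>] open_contains_ball by blast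
  then show "\<exists>r>0. (\<forall>l\<in>ball 0 r. a + scaleC l v \<in> \<Omega>) \<and> (\<lambda>l. g (a + scaleC l v)) holomorphic_on ball 0 r"
    using global holomorphic_on_subset unfolding line_trace_def by blast
qed

lemma HG_iff_lines:
  assumes "one_open \<Omega>"
  shows "f \<in> HG P \<Omega> \<longleftrightarrow>
           (\<forall>\<phi>\<in>lc_dual P. \<forall>a v. (\<lambda>l. \<phi> (f (a + scaleC l v))) holomorphic_on line_trace \<Omega> a v)"
  unfolding HG_def using holomorphic_along_lines_iff[OF assms, of "\<lambda>x. _ (f x)"] by blast

lemma HG_scalar_iff_lines:
  assumes "one_open \<Omega>"
  shows "h \<in> HG_scalar \<Omega> \<longleftrightarrow> (\<forall>a v. (\<lambda>l. h (a + scaleC l v)) holomorphic_on line_trace \<Omega> a v)"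
  unfolding HG_scalar_def using holomorphic_along_lines_iff[OF assms] by blast

lemma HG_comp_lc_dual:
  "one_open \<Omega> \<Longrightarrow> f \<in> HG P \<Omega> \<Longrightarrow> \<phi> \<in> lc_dual P \<Longrightarrow> (\<lambda>x. \<phi> (f x)) \<in> HG_scalar \<Omega>"
  by (simp add: HG_iff_lines HG_scalar_iff_lines)

lemma HG_const: "one_open \<Omega> \<Longrightarrow> (\<lambda>x. y) \<in> HG P \<Omega>"
  by (simp add: HG_iff_lines)

lemma HG_add:
  assumes "one_open \<Omega>" "f \<in> HG P \<Omega>" "g \<in> HG P \<Omega>"
  shows "(\<lambda>x. f x + g x) \<in> HG P \<Omega>"
  using assms by (auto simp: HG_iff_lines lc_dual_add intro!: holomorphic_intros)

lemma HG_scalar_scaleC: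
  assumes "one_open \<Omega>" "h \<in> HG_scalar \<Omega>" "f \<in> HG P \<Omega>"
  shows "(\<lambda>x. scaleC (h x) (f x)) \<in> HG P \<Omega>"
  using assms by (auto simp: HG_iff_lines HG_scalar_iff_lines lc_dual_scaleC intro!: holomorphic_intros)

lemma HG_scaleC:
  assumes "one_open \<Omega>" "f \<in> HG P \<Omega>"
  shows "(\<lambda>x. scaleC c (f x)) \<in> HG P \<Omega>"
  using assms by (auto simp: HG_iff_lines lc_dual_scaleC intro!: holomorphic_intros)

lemma HG_scalar_const: "one_open \<Omega> \<Longrightarrow> (\<lambda>x. c) \<in> HG_scalar \<Omega>"
  by (simp add: HG_scalar_iff_lines)

lemma HG_scalar_diff_const:
  "one_open \<Omega> \<Longrightarrow> h \<in> HG_scalar \<Omega> \<Longrightarrow> (\<lambda>x. h x - c) \<in> HG_scalar \<Omega>"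
  by (auto simp: HG_scalar_iff_lines intro!: holomorphic_intros)

lemma HG_scalar_mult:
  "one_open \<Omega> \<Longrightarrow> h \<in> HG_scalar \<Omega> \<Longrightarrow> g \<in> HG_scalar \<Omega> \<Longrightarrow> (\<lambda>x. h x * g x) \<in> HG_scalar \<Omega>"
  by (auto simp: HG_scalar_iff_lines intro!: holomorphic_intros)

lemma HG_scalar_inverse:
  assumes "one_open \<Omega>" "h \<in> HG_scalar \<Omega>" "\<And>x. x \<in> \<Omega> \<Longrightarrow> h x \<noteq> 0"
  shows "(\<lambda>x. inverse (h x)) \<in> HG_scalar \<Omega>"
  using assms by (auto simp: HG_scalar_iff_lines line_trace_def intro!: holomorphic_intros)

section \<open>Extensions of scalar and vector-valued maps\<close>

definition unique_ext_property_scalar :: "'a::complex_vector set \<Rightarrow> 'a set \<Rightarrow> 'a set \<Rightarrow> bool" where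
  "unique_ext_property_scalar \<Omega>0 \<Omega> C \<longleftrightarrow>
     (\<forall>h\<in>HG_scalar \<Omega>0. \<exists>H. is_ext_scalar \<Omega> C h H \<and>
        (\<forall>H'. is_ext_scalar \<Omega> C h H' \<longrightarrow> (\<forall>x\<in>\<Omega>. H' x = H x)))"

lemma unique_ext_property_eq:
  assumes "unique_ext_property P \<Omega>0 \<Omega> C" "f \<in> HG P \<Omega>0"
    and "is_ext P \<Omega> C f F1" "is_ext P \<Omega> C f F2" "x \<in> \<Omega>"
  shows "F1 x = F2 x"
  using assms unfolding unique_ext_property_def by metis

lemma unique_ext_property_scalar_eq:
  assumes "unique_ext_property_scalar \<Omega>0 \<Omega> C" "h \<in> HG_scalar \<Omega>0"
    and "is_ext_scalar \<Omega> C h H1" "is_ext_scalar \<Omega> C h H2" "x \<in> \<Omega>"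
  shows "H1 x = H2 x"
  using assms unfolding unique_ext_property_scalar_def by metis

lemma unique_ext_property_scalar_if_vector:
  fixes P :: "('b::complex_vector \<Rightarrow> real) set"
  assumes \<Omega>0: "one_open \<Omega>0" and \<Omega>: "one_open \<Omega>"
    and P: "sc_hausdorff_lcs P" and nontrivial: "(UNIV :: 'b set) \<noteq> {0}"
    and ue: "unique_ext_property P \<Omega>0 \<Omega> C"
  shows "unique_ext_property_scalar \<Omega>0 \<Omega> C"
  unfolding unique_ext_property_scalar_def
proof
  obtain y :: 'b where "y \<noteq> 0" using nontrivial by blast
  then obtain \<phi> where \<phi>: "\<phi> \<in> lc_dual P" "\<phi> y \<noteq> 0"
    using lc_dual_nonzero P unfolding sc_hausdorff_lcs_def by blast
  fix h assume h: "h \<in> HG_scalar \<Omega>0"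
  then have "(\<lambda>x. scaleC (h x) y) \<in> HG P \<Omega>0" by (intro HG_scalar_scaleC HG_const \<Omega>0)
  then obtain F where F: "is_ext P \<Omega> C (\<lambda>x. scaleC (h x) y) F"
    using ue unfolding unique_ext_property_def by blast
  define H where "H x = \<phi> (F x) / \<phi> y" for x
  have "(\<lambda>x. \<phi> (F x)) \<in> HG_scalar \<Omega>"
    using F HG_comp_lc_dual[OF \<Omega> _ \<phi>(1)] by (simp add: is_ext_def)
  then have "H \<in> HG_scalar \<Omega>"
    unfolding H_def divide_inverse by (intro HG_scalar_mult HG_scalar_const \<Omega>)
  moreover have "H x = h x" if "x \<in> C" for x
    using F \<phi> that unfolding is_ext_def H_def by (simp add: lc_dual_scaleC)
  ultimately have "is_ext_scalar \<Omega> C h H" unfolding is_ext_scalar_def by blast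
  moreover have "H' x = H x" if H': "is_ext_scalar \<Omega> C h H'" and "x \<in> \<Omega>" for H' x
  proof -
    have "is_ext P \<Omega> C (\<lambda>x. scaleC (h x) y) (\<lambda>x. scaleC (H' x) y)"
      using H' HG_scalar_scaleC[OF \<Omega> _ HG_const[OF \<Omega>]] unfolding is_ext_scalar_def is_ext_def by auto
    then have "scaleC (H' x) y = F x"
      using unique_ext_property_eq[OF ue \<open>_ \<in> HG P \<Omega>0\<close> _ F \<open>x \<in> \<Omega>\<close>] by blast
    then show ?thesis unfolding H_def using \<phi> by (metis lc_dual_scaleC nonzero_eq_divide_eq)
  qed
  ultimately show "\<exists>H. is_ext_scalar \<Omega> C h H \<and> (\<forall>H'. is_ext_scalar \<Omega> C h H' \<longrightarrow> (\<forall>x\<in>\<Omega>. H' x = H x))"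
    by blast
qed

lemma is_ext_scalar_scaleC:
  assumes "one_open \<Omega>" "is_ext_scalar \<Omega> C h H" "is_ext P \<Omega> C f F"
  shows "is_ext P \<Omega> C (\<lambda>x. scaleC (h x) (f x)) (\<lambda>x. scaleC (H x) (F x))"
  using assms HG_scalar_scaleC unfolding is_ext_scalar_def is_ext_def by auto

lemma ext_scalar_image_subset:
  assumes \<Omega>0: "one_open \<Omega>0" and \<Omega>: "one_open \<Omega>" and C: "C \<subseteq> \<Omega>0"
    and ue: "unique_ext_property_scalar \<Omega>0 \<Omega> C"
    and h: "h \<in> HG_scalar \<Omega>0" and H: "is_ext_scalar \<Omega> C h H"
  shows "H ` \<Omega> \<subseteq> h ` \<Omega>0"
proof (rule image_subsetI, rule ccontr)
  fix x0 assume x0: "x0 \<in> \<Omega>" and nin: "H x0 \<notin> h ` \<Omega>0"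
  define w where "w = H x0"
  have "h x \<noteq> w" if "x \<in> \<Omega>0" for x using nin that unfolding w_def by (metis image_eqI)
  then have "(\<lambda>x. inverse (h x - w)) \<in> HG_scalar \<Omega>0"
    by (intro HG_scalar_inverse HG_scalar_diff_const \<Omega>0 h) auto
  then obtain G where G: "is_ext_scalar \<Omega> C (\<lambda>x. inverse (h x - w)) G"
    using ue unfolding unique_ext_property_scalar_def by blast
  have "is_ext_scalar \<Omega> C (\<lambda>x. 1) (\<lambda>x. (H x - w) * G x)"
    unfolding is_ext_scalar_def
  proof
    show "(\<lambda>x. (H x - w) * G x) \<in> HG_scalar \<Omega>"
      using G H unfolding is_ext_scalar_def by (intro HG_scalar_mult HG_scalar_diff_const \<Omega>) auto
    show "\<forall>x\<in>C. (H x - w) * G x = 1"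
      using G H C \<open>\<And>x. x \<in> \<Omega>0 \<Longrightarrow> h x \<noteq> w\<close> unfolding is_ext_scalar_def by auto
  qed
  moreover have "is_ext_scalar \<Omega> C (\<lambda>x. 1) (\<lambda>x. 1)"
    unfolding is_ext_scalar_def using HG_scalar_const[OF \<Omega>] by simp
  ultimately have "(H x0 - w) * G x0 = 1"
    using unique_ext_property_scalar_eq[OF ue HG_scalar_const[OF \<Omega>0] _ _ x0] by blast
  then show False unfolding w_def by simp
qed

lemma nonempty_if_unique_ext_property:
  fixes P :: "('b::complex_vector \<Rightarrow> real) set"
  assumes \<Omega>: "one_open \<Omega>" and C: "C \<subseteq> \<Omega>0" and nontrivial: "(UNIV :: 'b set) \<noteq> {0}"
    and ue: "unique_ext_property P \<Omega>0 \<Omega> C" and "\<Omega> \<noteq> {}"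
  shows "\<Omega>0 \<noteq> {}"
proof
  assume "\<Omega>0 = {}"
  \<comment> \<open>then every holomorphic map on \<open>\<Omega>\<close> extends the zero map, in particular every constant\<close>
  with C have "C = {}" by blast
  obtain y :: 'b where "y \<noteq> 0" using nontrivial by blast
  obtain x where "x \<in> \<Omega>" using \<open>\<Omega> \<noteq> {}\<close> by blast
  have "(\<lambda>x. 0) \<in> HG P \<Omega>0" using \<open>\<Omega>0 = {}\<close> by (simp add: HG_def)
  moreover have "is_ext P \<Omega> C (\<lambda>x. 0) (\<lambda>x. c)" for c
    using \<open>C = {}\<close> HG_const[OF \<Omega>] by (simp add: is_ext_def)
  ultimately have "y = 0" using unique_ext_property_eq[OF ue _ _ _ \<open>x \<in> \<Omega>\<close>] by metis
  with \<open>y \<noteq> 0\<close> show False ..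
qed

lemma ext_image_subset_closed_convex_hull:
  fixes P :: "('b::complex_vector \<Rightarrow> real) set"
  assumes \<Omega>0: "one_open \<Omega>0" and \<Omega>: "one_open \<Omega>" and C: "C \<subseteq> \<Omega>0"
    and P: "\<forall>p\<in>P. seminorm p" and nontrivial: "(UNIV :: 'b set) \<noteq> {0}"
    and ue: "unique_ext_property P \<Omega>0 \<Omega> C" and ue_scalar: "unique_ext_property_scalar \<Omega>0 \<Omega> C"
    and f: "f \<in> HG P \<Omega>0" and F: "is_ext P \<Omega> C f F"
  shows "F ` \<Omega> \<subseteq> closed_convex_hull P (f ` \<Omega>0)"
proof (rule image_subsetI, rule ccontr)
  fix x0 assume x0: "x0 \<in> \<Omega>" and nin: "F x0 \<notin> closed_convex_hull P (f ` \<Omega>0)"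
  have "\<Omega>0 \<noteq> {}" using nonempty_if_unique_ext_property[OF \<Omega> C nontrivial ue] x0 by blast
  then obtain \<phi> where \<phi>: "\<phi> \<in> lc_dual P" "\<forall>x\<in>\<Omega>0. 1 \<le> Re (\<phi> (f x) - \<phi> (F x0))"
    using lc_dual_separating_point_closed_convex_hull[OF P _ nin] by blast
  have "is_ext_scalar \<Omega> C (\<lambda>x. \<phi> (f x)) (\<lambda>x. \<phi> (F x))"
    using F HG_comp_lc_dual[OF \<Omega> _ \<phi>(1)] unfolding is_ext_scalar_def is_ext_def by auto
  from ext_scalar_image_subset[OF \<Omega>0 \<Omega> C ue_scalar HG_comp_lc_dual[OF \<Omega>0 f \<phi>(1)] this] x0
  obtain x1 where "x1 \<in> \<Omega>0" "\<phi> (F x0) = \<phi> (f x1)" by blast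
  then show False using \<phi>(2) by force
qed

lemma lc_topology_norm: "lc_topology {norm :: 'c::{complex_vector, real_normed_vector} \<Rightarrow> real} = euclidean"
proof -
  have "openin (lc_topology {norm :: 'c \<Rightarrow> real}) U \<longleftrightarrow> (\<forall>y\<in>U. \<exists>e>0. ball y e \<subseteq> U)" for U :: "'c set"
  proof -
    have ball: "ball y e = {z. \<forall>p\<in>{norm}. p (z - y) < e}" for y :: 'c and e
      by (auto simp: dist_norm norm_minus_commute)
    have sub: "ball y e \<subseteq> {z. \<forall>p\<in>F. p (z - y) < e}" if "F \<subseteq> {norm}" for F and y :: 'c and e
      using that unfolding ball by blast
    then show ?thesis unfolding openin_lc_topology
    proof (intro iffI ballI)
      fix y assume "\<forall>y\<in>U. \<exists>F. finite F \<and> F \<subseteq> {norm} \<and> (\<exists>e>0. {z. \<forall>p\<in>F. p (z - y) < e} \<subseteq> U)"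
        and "y \<in> U"
      then have "\<exists>F. finite F \<and> F \<subseteq> {norm} \<and> (\<exists>e>0. {z. \<forall>p\<in>F. p (z - y) < e} \<subseteq> U)" ..
      then show "\<exists>e>0. ball y e \<subseteq> U" using sub by (meson order_trans)
    next
      fix y assume "\<forall>y\<in>U. \<exists>e>0. ball y e \<subseteq> U" and "y \<in> U"
      then have "\<exists>e>0. ball y e \<subseteq> U" ..
      then show "\<exists>F. finite F \<and> F \<subseteq> {norm} \<and> (\<exists>e>0. {z. \<forall>p\<in>F. p (z - y) < e} \<subseteq> U)"
        unfolding ball by (intro exI[of _ "{norm}"]) simp
    qed
  qed
  then show ?thesis by (simp add: topology_eq open_contains_ball)
qed

lemma continuous_on_lc_dual_norm:
  "\<phi> \<in> lc_dual {norm :: 'c::{complex_vector, real_normed_vector} \<Rightarrow> real} \<Longrightarrow> continuous_on UNIV \<phi>"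
  unfolding lc_dual_def lc_topology_norm by (simp add: continuous_map_iff_continuous)

lemma seminorm_norm: "seminorm (norm :: 'c::complex_banach_algebra_1 \<Rightarrow> real)"
  unfolding seminorm_def by (simp add: norm_triangle_ineq norm_scaleC)

lemma exists_norming_functional:
  fixes x :: "'c::real_normed_vector"
  assumes "x \<noteq> 0"
  shows "\<exists>\<kappa>. linear \<kappa> \<and> (\<forall>w. \<bar>\<kappa> w\<bar> \<le> norm w) \<and> \<kappa> x = norm x"
proof -
  define q where "q z = norm z / norm x" for z :: 'c
  have nx: "norm x > 0" using assms by simp
  have "sublinear q" unfolding sublinear_def q_def using nx
    by (auto simp: norm_triangle_ineq add_divide_distrib[symmetric] divide_right_mono)
  then obtain \<psi> where \<psi>: "linear \<psi>" "\<psi> \<le> q" "1 \<le> \<psi> x"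
    using linear_functional_separating_convex[of q "{x}"] nx unfolding q_def by auto
  have "\<bar>\<psi> w\<bar> \<le> norm w / norm x" for w
    using \<psi>(2) linear_neg[OF \<psi>(1), of w] unfolding le_fun_def q_def
    by (metis abs_le_iff minus_le_iff norm_minus_cancel)
  moreover have "\<psi> x = 1"
  proof -
    have "\<psi> x \<le> q x" using \<psi>(2) by (simp add: le_fun_def)
    then show ?thesis using \<psi>(3) nx by (simp add: q_def)
  qed
  moreover have "linear (\<lambda>z. norm x * \<psi> z)"
    using linear_compose_scale_right[OF \<psi>(1), of "norm x"] by simp
  ultimately show ?thesis using nx
    by (intro exI[of _ "\<lambda>z. norm x * \<psi> z"]) (auto simp: abs_mult field_simps)
qed

lemma complexify_in_lc_dual_norm:
  fixes \<kappa> :: "'c::complex_banach_algebra_1 \<Rightarrow> real"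
  assumes "linear \<kappa>" "\<And>w. \<bar>\<kappa> w\<bar> \<le> K * norm w"
  shows "complexify \<kappa> \<in> lc_dual {norm}" and "\<And>w. cmod (complexify \<kappa> w) \<le> 2 * K * norm w"
proof -
  show "complexify \<kappa> \<in> lc_dual {norm}"
    using assms seminorm_norm by (intro complexify_in_lc_dual[of "{norm}" "{norm}"]) auto
  show "cmod (complexify \<kappa> w) \<le> 2 * K * norm w" for w
    using norm_complexify_le[of \<kappa> w] assms(2)[of w] assms(2)[of "scaleC \<i> w"] by (simp add: norm_scaleC)
qed

lemma norm_le_by_lc_dual:
  fixes z :: "'c::complex_banach_algebra_1"
  assumes "\<And>\<phi>. \<phi> \<in> lc_dual {norm} \<Longrightarrow> (\<forall>w. cmod (\<phi> w) \<le> 2 * norm w) \<Longrightarrow> cmod (\<phi> z) \<le> B"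
  shows "norm z \<le> B"
proof (cases "z = 0")
  case True
  have "(\<lambda>w. 0) \<in> lc_dual {norm :: 'c \<Rightarrow> real}" unfolding lc_dual_def by simp
  then show ?thesis using assms[of "\<lambda>w. 0"] True by simp
next
  case False
  then obtain \<kappa> where \<kappa>: "linear \<kappa>" "\<forall>w. \<bar>\<kappa> w\<bar> \<le> norm w" "\<kappa> z = norm z"
    using exists_norming_functional by blast
  have "\<bar>\<kappa> w\<bar> \<le> 1 * norm w" for w using \<kappa>(2) by simp
  note c = complexify_in_lc_dual_norm[OF \<kappa>(1) this]
  have "norm z = Re (complexify \<kappa> z)" using \<kappa>(3) by simp
  also have "\<dots> \<le> cmod (complexify \<kappa> z)" by (rule complex_Re_le_cmod)
  also have "\<dots> \<le> B" using assms[OF c(1)] c(2) by simp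
  finally show ?thesis .
qed

theorem uniform_boundedness_weak:
  fixes S :: "'c::real_normed_vector set"
  assumes weakly_bounded: "\<And>\<psi> :: 'c \<Rightarrow>\<^sub>L real. \<exists>B. \<forall>x\<in>S. \<bar>\<psi> x\<bar> \<le> B"
  shows "\<exists>M. \<forall>x\<in>S. norm x \<le> M"
proof -
  define E where "E n = {\<psi> :: 'c \<Rightarrow>\<^sub>L real. \<forall>x\<in>S. \<bar>\<psi> x\<bar> \<le> real n}" for n :: nat
  have closed: "closed (E n)" for n
  proof -
    have "E n = (\<Inter>x\<in>S. {\<psi>. \<bar>blinfun_apply \<psi> x\<bar> \<le> real n})" unfolding E_def by auto
    then show ?thesis by (auto intro!: closed_Collect_le continuous_intros)
  qed
  have cover: "(\<Union>n. E n) = UNIV"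
  proof -
    have "\<psi> \<in> E (nat \<lceil>B\<rceil>)" if "\<forall>x\<in>S. \<bar>\<psi> x\<bar> \<le> B" for \<psi> :: "'c \<Rightarrow>\<^sub>L real" and B
      using that real_nat_ceiling_ge[of B] unfolding E_def by (auto intro: order_trans)
    then have "\<psi> \<in> (\<Union>n. E n)" for \<psi> using weakly_bounded[of \<psi>] by blast
    then show ?thesis by blast
  qed
  \<comment> \<open>Baire: the dual space is complete, so some \<open>E n\<close> contains a ball\<close>
  have "\<exists>n. interior (E n) \<noteq> {}"
  proof (rule ccontr)
    assume "\<not> (\<exists>n. interior (E n) \<noteq> {})"
    then have "euclidean interior_of (\<Union>(range E)) = {}"
      using closed by (intro Baire_category_alt) (auto simp: completely_metrizable_space_euclidean)
    then show False using cover by simp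
  qed
  then obtain n \<psi>0 r where r: "r > 0" "ball \<psi>0 r \<subseteq> E n"
    by (meson ex_in_conv interior_subset open_contains_ball open_interior subset_trans)
  have "norm x \<le> 4 * real n / r" if x: "x \<in> S" for x
  proof (cases "x = 0")
    case False
    then obtain \<kappa> where \<kappa>: "linear \<kappa>" "\<forall>w. \<bar>\<kappa> w\<bar> \<le> norm w" "\<kappa> x = norm x"
      using exists_norming_functional by blast
    then have bl: "bounded_linear \<kappa>"
      by (intro bounded_linear_intro[where K=1]) (auto simp: linear_add linear_scale)
    have "norm (Blinfun \<kappa>) \<le> 1"
      by (rule norm_blinfun_bound) (use \<kappa>(2) bl in \<open>auto simp: bounded_linear_Blinfun_apply\<close>)
    then have "\<psi>0 + (r/2) *\<^sub>R Blinfun \<kappa> \<in> E n" "\<psi>0 \<in> E n" using r by (auto simp: dist_norm)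
    then have "\<bar>\<psi>0 x + (r/2) * norm x\<bar> \<le> real n" "\<bar>\<psi>0 x\<bar> \<le> real n"
      using x \<kappa>(3) unfolding E_def
      by (auto simp: blinfun.add_left blinfun.scaleR_left bounded_linear_Blinfun_apply[OF bl])
    then show ?thesis using r by (simp add: field_simps)
  qed (use r in simp)
  then show ?thesis by blast
qed

section \<open>Weakly holomorphic maps into a Banach algebra are strongly holomorphic\<close>

lemma convergent_at_if_Cauchy:
  fixes f :: "'a::metric_space \<Rightarrow> 'c::complete_space"
  assumes Cauchy: "\<And>e. e > 0 \<Longrightarrow> \<exists>d>0. \<forall>s t. s \<noteq> s0 \<longrightarrow> t \<noteq> s0 \<longrightarrow> dist s s0 < d \<longrightarrow> dist t s0 < d
      \<longrightarrow> dist (f s) (f t) < e"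
  shows "\<exists>L. (f \<longlongrightarrow> L) (at s0)"
proof (cases "at s0 = (bot :: 'a filter)")
  case False
  have "cauchy_filter (filtermap f (at s0))"
    unfolding cauchy_filter_metric_filtermap
  proof (intro allI impI)
    fix e :: real assume "e > 0"
    then obtain d where "d > 0"
      and d: "\<forall>s t. s \<noteq> s0 \<longrightarrow> t \<noteq> s0 \<longrightarrow> dist s s0 < d \<longrightarrow> dist t s0 < d \<longrightarrow> dist (f s) (f t) < e"
      using Cauchy by blast
    have "eventually (\<lambda>s. s \<noteq> s0 \<and> dist s s0 < d) (at s0)"
      unfolding eventually_at using \<open>d > 0\<close> by blast
    with d show "\<exists>P. eventually P (at s0) \<and> (\<forall>x y. P x \<and> P y \<longrightarrow> dist (f x) (f y) < e)" by blast
  qed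
  moreover have "filtermap f (at s0) \<noteq> bot" using False by (simp add: filtermap_bot_iff)
  ultimately have "\<exists>L. filtermap f (at s0) \<le> nhds L"
    using complete_UNIV[unfolded complete_uniform, rule_format, of "filtermap f (at s0)"] by simp
  then show ?thesis unfolding filterlim_def .
qed simp

lemma holomorphic_Taylor_remainder_bound:
  fixes g :: "complex \<Rightarrow> complex"
  assumes hol: "g holomorphic_on W" and W: "open W" and sub: "cball s0 (2*\<rho>) \<subseteq> W" and rho: "\<rho> > 0"
    and bnd: "\<And>s. s \<in> cball s0 (2*\<rho>) \<Longrightarrow> cmod (g s) \<le> M"
    and s: "s \<in> cball s0 \<rho>"
  shows "cmod (g s - (g s0 + deriv g s0 * (s - s0))) \<le> (2 * M / \<rho>^2) * cmod (s - s0)^2"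
proof -
  define f where "f i = (deriv ^^ i) g" for i
  have hf: "f i holomorphic_on W" for i unfolding f_def by (rule holomorphic_higher_deriv[OF hol W])
  have d: "(f i has_field_derivative f (Suc i) x) (at x within cball s0 \<rho>)" if "x \<in> cball s0 \<rho>" for i x
  proof -
    have "x \<in> W" using that sub rho by (auto simp: dist_norm)
    then show ?thesis using holomorphic_derivI[OF hf W] unfolding f_def by simp
  qed
  have B: "cmod (f (Suc 1) x) \<le> 2 * M / \<rho>^2" if x: "x \<in> cball s0 \<rho>" for x
  proof -
    have cb: "cball x \<rho> \<subseteq> cball s0 (2*\<rho>)"
    proof
      fix y assume "y \<in> cball x \<rho>"
      then have "dist x y \<le> \<rho>" by simp
      moreover have "dist s0 x \<le> \<rho>" using x by simp
      moreover have "dist s0 y \<le> dist s0 x + dist x y" by (rule dist_triangle)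
      ultimately show "y \<in> cball s0 (2*\<rho>)" by simp
    qed
    have "norm ((deriv ^^ 2) g x) \<le> fact 2 * M / \<rho>^2"
    proof (rule Cauchy_inequality)
      show "g holomorphic_on ball x \<rho>" using hol cb sub by (meson ball_subset_cball holomorphic_on_subset subset_trans)
      show "continuous_on (cball x \<rho>) g" using hol cb sub
        by (meson holomorphic_on_imp_continuous_on continuous_on_subset subset_trans)
      show "0 < \<rho>" by (rule rho)
      show "norm (g y) \<le> M" if "norm (x - y) = \<rho>" for y
        using that cb by (intro bnd) (auto simp: dist_norm)
    qed
    then show ?thesis unfolding f_def by (simp add: numeral_2_eq_2)
  qed
  have "norm (f 0 s - (\<Sum>i\<le>1. f i s0 * (s - s0) ^ i / fact i)) \<le> (2 * M / \<rho>^2) * norm (s - s0) ^ Suc 1 / fact 1"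
    by (rule field_Taylor[of "cball s0 \<rho>" 1 f]) (use d B s rho in auto)
  then show ?thesis unfolding f_def by (simp add: power2_eq_square)
qed

lemma convergent_at_if_dist_estimate:
  fixes f :: "'a::metric_space \<Rightarrow> 'c::complete_space"
  assumes "\<rho> > 0"
    and estimate: "\<And>s t. s \<noteq> s0 \<Longrightarrow> t \<noteq> s0 \<Longrightarrow> dist s s0 < \<rho> \<Longrightarrow> dist t s0 < \<rho> \<Longrightarrow>
      dist (f s) (f t) \<le> C * (dist s s0 + dist t s0)"
  shows "\<exists>L. (f \<longlongrightarrow> L) (at s0)"
proof (rule convergent_at_if_Cauchy)
  fix e :: real assume "e > 0"
  define d where "d = min \<rho> (e / (2 * \<bar>C\<bar> + 1))"
  have "d > 0" using \<open>\<rho> > 0\<close> \<open>e > 0\<close> by (simp add: d_def)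
  moreover have "dist (f s) (f t) < e"
    if "s \<noteq> s0" "t \<noteq> s0" "dist s s0 < d" "dist t s0 < d" for s t
  proof -
    have "dist (f s) (f t) \<le> C * (dist s s0 + dist t s0)"
      using estimate[of s t] that by (simp add: d_def)
    also have "\<dots> \<le> \<bar>C\<bar> * (dist s s0 + dist t s0)" by (intro mult_right_mono) auto
    also have "\<dots> \<le> \<bar>C\<bar> * (2 * (e / (2 * \<bar>C\<bar> + 1)))"
      using that by (intro mult_left_mono) (auto simp: d_def)
    also have "\<dots> < e" using \<open>e > 0\<close> by (simp add: field_simps)
    finally show ?thesis .
  qed
  ultimately show "\<exists>d>0. \<forall>s t. s \<noteq> s0 \<longrightarrow> t \<noteq> s0 \<longrightarrow> dist s s0 < d \<longrightarrow> dist t s0 < d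
      \<longrightarrow> dist (f s) (f t) < e" by blast
qed

definition strongly_holomorphic_on :: "(complex \<Rightarrow> 'c::complex_banach_algebra_1) \<Rightarrow> complex set \<Rightarrow> bool" where
  "strongly_holomorphic_on u W \<longleftrightarrow> (\<forall>s\<in>W. \<exists>L. ((\<lambda>t. scaleC (1 / (t - s)) (u t - u s)) \<longlongrightarrow> L) (at s))"

lemma weakly_holomorphic_imp_bounded:
  fixes u :: "complex \<Rightarrow> 'c::complex_banach_algebra_1"
  assumes weak: "\<And>\<phi>. \<phi> \<in> lc_dual {norm} \<Longrightarrow> (\<lambda>s. \<phi> (u s)) holomorphic_on W"
    and K: "compact K" "K \<subseteq> W"
  shows "\<exists>M. \<forall>s\<in>K. norm (u s) \<le> M"
proof -
  have "\<exists>B. \<forall>x\<in>u ` K. \<bar>\<psi> x\<bar> \<le> B" for \<psi> :: "'c \<Rightarrow>\<^sub>L real"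
  proof -
    have "linear (blinfun_apply \<psi>)" by (simp add: blinfun.bounded_linear_right bounded_linear.linear)
    moreover have "\<bar>\<psi> w\<bar> \<le> norm \<psi> * norm w" for w using norm_blinfun[of \<psi> w] by simp
    ultimately have "complexify \<psi> \<in> lc_dual {norm}" by (rule complexify_in_lc_dual_norm)
    then have "continuous_on K (\<lambda>s. complexify \<psi> (u s))"
      using weak K(2) by (meson holomorphic_on_imp_continuous_on holomorphic_on_subset)
    then obtain B where "\<forall>s\<in>K. cmod (complexify \<psi> (u s)) \<le> B"
      using compact_continuous_image[OF _ K(1)] compact_imp_bounded bounded_iff by (metis imageI)
    then have "\<forall>s\<in>K. \<bar>\<psi> (u s)\<bar> \<le> B"
      using abs_Re_le_cmod[of "complexify \<psi> _"] by (metis Re_complexify order_trans)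
    then show ?thesis by blast
  qed
  then show ?thesis using uniform_boundedness_weak[of "u ` K"] by blast
qed

lemma lc_dual_difference_quotient_estimate:
  fixes u :: "complex \<Rightarrow> 'c::complex_banach_algebra_1"
  assumes W: "open W" "cball s0 (2*\<rho>) \<subseteq> W" "\<rho> > 0"
    and \<phi>: "\<phi> \<in> lc_dual {norm}" "\<forall>w. cmod (\<phi> w) \<le> 2 * norm w"
    and hol: "(\<lambda>s. \<phi> (u s)) holomorphic_on W"
    and M: "\<And>s. s \<in> cball s0 (2*\<rho>) \<Longrightarrow> norm (u s) \<le> M"
    and s: "s \<in> cball s0 \<rho>" "s \<noteq> s0"
  shows "cmod (\<phi> (scaleC (1 / (s - s0)) (u s - u s0)) - deriv (\<lambda>s. \<phi> (u s)) s0)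
           \<le> 4 * M / \<rho>^2 * cmod (s - s0)"
proof -
  define g where "g = (\<lambda>s. \<phi> (u s))"
  have "cmod (g s) \<le> 2 * M" if "s \<in> cball s0 (2*\<rho>)" for s
    using \<phi>(2) M[OF that] unfolding g_def by (meson mult_left_mono order_trans zero_le_numeral)
  then have taylor: "cmod (g s - (g s0 + deriv g s0 * (s - s0))) \<le> 4 * M / \<rho>^2 * cmod (s - s0)^2"
    using holomorphic_Taylor_remainder_bound[of g W s0 \<rho> "2 * M" s] hol W s(1) by (simp add: g_def)
  have "\<phi> (scaleC (1 / (s - s0)) (u s - u s0)) - deriv g s0
          = (g s - (g s0 + deriv g s0 * (s - s0))) / (s - s0)"
    using s(2) by (simp add: g_def lc_dual_scaleC[OF \<phi>(1)] lc_dual_diff[OF \<phi>(1)] field_simps)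
  also have "cmod \<dots> \<le> 4 * M / \<rho>^2 * cmod (s - s0)^2 / cmod (s - s0)"
    unfolding norm_divide using taylor by (rule divide_right_mono) simp
  also have "\<dots> = 4 * M / \<rho>^2 * cmod (s - s0)"
    using s(2) by (simp add: power2_eq_square)
  finally show ?thesis unfolding g_def .
qed

theorem weakly_holomorphic_imp_strongly_holomorphic:
  fixes u :: "complex \<Rightarrow> 'c::complex_banach_algebra_1"
  assumes W: "open W" and weak: "\<And>\<phi>. \<phi> \<in> lc_dual {norm} \<Longrightarrow> (\<lambda>s. \<phi> (u s)) holomorphic_on W"
  shows "strongly_holomorphic_on u W"
  unfolding strongly_holomorphic_on_def
proof
  fix s0 assume "s0 \<in> W"
  then obtain R where "R > 0" "cball s0 R \<subseteq> W" using W open_contains_cball by blast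
  define \<rho> where "\<rho> = R / 2"
  have \<rho>: "\<rho> > 0" "cball s0 (2 * \<rho>) \<subseteq> W" using \<open>R > 0\<close> \<open>cball s0 R \<subseteq> W\<close> by (auto simp: \<rho>_def)
  obtain M where M: "\<And>s. s \<in> cball s0 (2 * \<rho>) \<Longrightarrow> norm (u s) \<le> M"
    using weakly_holomorphic_imp_bounded[where u=u and W=W, OF weak compact_cball \<rho>(2)] by blast
  define C where "C = 4 * M / \<rho>^2"
  define Q where "Q s = scaleC (1 / (s - s0)) (u s - u s0)" for s
  \<comment> \<open>Cauchy's estimate for each normalised functional, lifted to the norm by Hahn-Banach\<close>
  have est: "norm (Q s - Q t) \<le> C * (cmod (s - s0) + cmod (t - s0))"
    if s: "s \<in> cball s0 \<rho>" "s \<noteq> s0" and t: "t \<in> cball s0 \<rho>" "t \<noteq> s0" for s t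
  proof (rule norm_le_by_lc_dual)
    fix \<phi> :: "'c \<Rightarrow> complex" assume \<phi>: "\<phi> \<in> lc_dual {norm}" "\<forall>w. cmod (\<phi> w) \<le> 2 * norm w"
    define d where "d = deriv (\<lambda>s. \<phi> (u s)) s0"
    have estimate: "cmod (\<phi> (Q r) - d) \<le> C * cmod (r - s0)" if "r \<in> cball s0 \<rho>" "r \<noteq> s0" for r
      using lc_dual_difference_quotient_estimate[OF W \<rho>(2,1) \<phi> weak[OF \<phi>(1)]] M that
      unfolding C_def Q_def d_def by blast
    have "\<phi> (Q s - Q t) = (\<phi> (Q s) - d) - (\<phi> (Q t) - d)" using lc_dual_diff[OF \<phi>(1)] by simp
    also have "cmod \<dots> \<le> cmod (\<phi> (Q s) - d) + cmod (\<phi> (Q t) - d)" by (rule norm_triangle_ineq4)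
    also have "\<dots> \<le> C * cmod (s - s0) + C * cmod (t - s0)"
      using estimate[OF s] estimate[OF t] by (rule add_mono)
    finally show "cmod (\<phi> (Q s - Q t)) \<le> C * (cmod (s - s0) + cmod (t - s0))"
      by (simp add: distrib_left)
  qed
  have "\<exists>L. (Q \<longlongrightarrow> L) (at s0)"
    using est by (intro convergent_at_if_dist_estimate[OF \<rho>(1), where C=C])
      (auto simp: dist_norm norm_minus_commute)
  then show "\<exists>L. ((\<lambda>t. scaleC (1 / (t - s0)) (u t - u s0)) \<longlongrightarrow> L) (at s0)" unfolding Q_def .
qed

lemma bounded_bilinear_scaleC: "bounded_bilinear (\<lambda>(a::complex) (b::'c::complex_banach_algebra_1). scaleC a b)"
proof
  fix a a' :: complex and b b' :: 'c and r :: real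
  show "scaleC (a + a') b = scaleC a b + scaleC a' b" by (rule scaleC_add_left)
  show "scaleC a (b + b') = scaleC a b + scaleC a b'" by (rule scaleC_add_right)
  have "r *\<^sub>R a = of_real r * a" by (simp add: scaleR_conv_of_real)
  then show "scaleC (r *\<^sub>R a) b = r *\<^sub>R scaleC a b"
    by (simp only: scaleR_scaleC[of r "scaleC a b"] scaleC_scaleC)
  show "scaleC a (r *\<^sub>R b) = r *\<^sub>R scaleC a b"
    by (simp add: scaleR_scaleC scaleC_scaleC mult.commute)
  show "\<exists>K. \<forall>a b. norm (scaleC a (b::'c)) \<le> norm a * norm b * K"
    by (rule exI[of _ 1]) (simp add: norm_scaleC)
qed

lemmas tendsto_scaleC = bounded_bilinear.tendsto[OF bounded_bilinear_scaleC]

lemma strongly_holomorphic_on_imp_tendsto: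
  assumes "strongly_holomorphic_on u W" "s \<in> W"
  shows "(u \<longlongrightarrow> u s) (at s)"
proof -
  obtain L where L: "((\<lambda>t. scaleC (1 / (t - s)) (u t - u s)) \<longlongrightarrow> L) (at s)"
    using assms unfolding strongly_holomorphic_on_def by blast
  have "((\<lambda>t. u s + scaleC (t - s) (scaleC (1 / (t - s)) (u t - u s))) \<longlongrightarrow> u s + scaleC (s - s) L) (at s)"
    by (intro tendsto_add tendsto_const tendsto_scaleC L tendsto_diff tendsto_ident_at)
  moreover have "\<forall>\<^sub>F t in at s. u s + scaleC (t - s) (scaleC (1 / (t - s)) (u t - u s)) = u t"
    by (auto simp: eventually_at_filter scaleC_scaleC scaleC_one)
  ultimately show ?thesis by (simp add: Lim_transform_eventually)
qed

lemma strongly_holomorphic_on_mult: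
  assumes u: "strongly_holomorphic_on u W" and w: "strongly_holomorphic_on w W"
  shows "strongly_holomorphic_on (\<lambda>t. u t * w t) W"
  unfolding strongly_holomorphic_on_def
proof
  fix s assume s: "s \<in> W"
  obtain Lu where Lu: "((\<lambda>t. scaleC (1 / (t - s)) (u t - u s)) \<longlongrightarrow> Lu) (at s)"
    using u s unfolding strongly_holomorphic_on_def by blast
  obtain Lw where Lw: "((\<lambda>t. scaleC (1 / (t - s)) (w t - w s)) \<longlongrightarrow> Lw) (at s)"
    using w s unfolding strongly_holomorphic_on_def by blast
  have eq: "scaleC (1 / (t - s)) (u t * w t - u s * w s) =
     scaleC (1 / (t - s)) (u t - u s) * w t + u s * scaleC (1 / (t - s)) (w t - w s)" for t
  proof -
    have "u t * w t - u s * w s = (u t - u s) * w t + u s * (w t - w s)" by (simp add: algebra_simps)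
    then show ?thesis by (simp add: scaleC_add_right scaleC_mult_left[symmetric] scaleC_mult_right[symmetric])
  qed
  have "((\<lambda>t. scaleC (1 / (t - s)) (u t - u s) * w t + u s * scaleC (1 / (t - s)) (w t - w s))
      \<longlongrightarrow> Lu * w s + u s * Lw) (at s)"
    by (intro tendsto_add tendsto_mult Lu Lw tendsto_const strongly_holomorphic_on_imp_tendsto[OF w s])
  then show "\<exists>L. ((\<lambda>t. scaleC (1 / (t - s)) (u t * w t - u s * w s)) \<longlongrightarrow> L) (at s)"
    unfolding eq by blast
qed

lemma ring_inverse_diff:
  fixes u v u' v' :: "'a::ring_1"
  assumes "u * v = 1" "v' * u' = 1"
  shows "v' - v = - (v' * (u' - u) * v)"
proof -
  have "v' * (u' - u) * v = (v' * u') * v - v' * (u * v)" by (simp add: algebra_simps)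
  then show ?thesis using assms by simp
qed

lemma norm_ring_inverse_diff_le:
  fixes u v a b :: "'c::real_normed_algebra_1"
  assumes "a * b = 1" "v * u = 1" and close: "norm (u - a) * norm b \<le> 1/2"
  shows "norm (v - b) \<le> 2 * norm b * norm b * norm (u - a)"
proof -
  have bound: "norm (v - b) \<le> norm v * norm (u - a) * norm b"
  proof -
    have "norm (v - b) = norm (v * (u - a) * b)"
      using ring_inverse_diff[OF assms(1,2)] by simp
    also have "\<dots> \<le> norm (v * (u - a)) * norm b" by (rule norm_mult_ineq)
    also have "\<dots> \<le> norm v * norm (u - a) * norm b"
      by (intro mult_right_mono norm_mult_ineq norm_ge_zero)
    finally show ?thesis .
  qed
  have "norm v \<le> norm b + norm (v - b)" by (metis norm_triangle_sub add.commute)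
  also have "\<dots> \<le> norm b + norm v * (norm (u - a) * norm b)" using bound by (simp add: mult.assoc)
  also have "\<dots> \<le> norm b + norm v * (1/2)" using close by (intro add_left_mono mult_left_mono) auto
  finally have "norm v \<le> 2 * norm b" by simp
  have "norm (v - b) \<le> norm v * norm (u - a) * norm b" by (rule bound)
  also have "\<dots> \<le> (2 * norm b) * norm (u - a) * norm b"
    using \<open>norm v \<le> 2 * norm b\<close> by (intro mult_right_mono) auto
  also have "\<dots> = 2 * norm b * norm b * norm (u - a)" by (simp add: algebra_simps)
  finally show ?thesis .
qed

lemma tendsto_ring_inverse:
  fixes u v :: "'x \<Rightarrow> 'c::real_normed_algebra_1"
  assumes u: "(u \<longlongrightarrow> a) F" and inv: "\<forall>\<^sub>F t in F. v t * u t = 1" and ab: "a * b = 1"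
  shows "(v \<longlongrightarrow> b) F"
proof -
  define c where "c = norm b"
  have "\<forall>\<^sub>F t in F. norm (u t - a) * c \<le> 1/2"
  proof (cases "c = 0")
    case False
    then have "c > 0" unfolding c_def by simp
    have "((\<lambda>t. u t - a) \<longlongrightarrow> 0) F" using u by (rule LIM_zero)
    then have "\<forall>\<^sub>F t in F. norm (u t - a) < 1 / (2 * c)"
      using \<open>c > 0\<close> by (simp add: tendsto_iff)
    then show ?thesis by eventually_elim (use \<open>c > 0\<close> in \<open>simp add: field_simps\<close>)
  qed simp
  with inv have "\<forall>\<^sub>F t in F. norm (v t - b) \<le> 2 * c * c * norm (u t - a)"
    unfolding c_def by eventually_elim (use ab norm_ring_inverse_diff_le in blast)
  moreover have "((\<lambda>t. 2 * c * c * norm (u t - a)) \<longlongrightarrow> 2 * c * c * norm (a - a)) F"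
    by (intro tendsto_intros u)
  ultimately have "((\<lambda>t. v t - b) \<longlongrightarrow> 0) F" by (simp add: Lim_null_comparison)
  then show ?thesis by (rule LIM_zero_cancel)
qed

lemma strongly_holomorphic_on_inverse:
  assumes u: "strongly_holomorphic_on u W" and W: "open W"
    and inv: "\<And>t. t \<in> W \<Longrightarrow> u t * v t = 1 \<and> v t * u t = 1"
  shows "strongly_holomorphic_on v W"
  unfolding strongly_holomorphic_on_def
proof
  fix s assume s: "s \<in> W"
  obtain L where L: "((\<lambda>t. scaleC (1 / (t - s)) (u t - u s)) \<longlongrightarrow> L) (at s)"
    using u s unfolding strongly_holomorphic_on_def by blast
  have near: "\<forall>\<^sub>F t in at s. t \<in> W" using W s by (rule eventually_at_in_open')
  then have "(v \<longlongrightarrow> v s) (at s)"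
    using inv[OF s] inv by (intro tendsto_ring_inverse[OF strongly_holomorphic_on_imp_tendsto[OF u s]])
      (auto elim: eventually_mono)
  then have "((\<lambda>t. - (v t * scaleC (1 / (t - s)) (u t - u s) * v s)) \<longlongrightarrow> - (v s * L * v s)) (at s)"
    by (intro tendsto_minus tendsto_mult L tendsto_const)
  moreover have "\<forall>\<^sub>F t in at s.
      - (v t * scaleC (1 / (t - s)) (u t - u s) * v s) = scaleC (1 / (t - s)) (v t - v s)"
    using near
  proof eventually_elim
    case (elim t)
    have "v t - v s = - (v t * (u t - u s) * v s)"
      using ring_inverse_diff[of "u s" "v s" "v t" "u t"] inv[OF s] inv[OF elim] by blast
    moreover have "scaleC (1 / (t - s)) (v t * (u t - u s) * v s) = v t * scaleC (1 / (t - s)) (u t - u s) * v s"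
      by (metis scaleC_mult_left scaleC_mult_right)
    ultimately show ?case by (simp add: scaleC_minus_right)
  qed
  ultimately have "((\<lambda>t. scaleC (1 / (t - s)) (v t - v s)) \<longlongrightarrow> - (v s * L * v s)) (at s)"
    by (rule Lim_transform_eventually)
  then show "\<exists>L. ((\<lambda>t. scaleC (1 / (t - s)) (v t - v s)) \<longlongrightarrow> L) (at s)" by blast
qed

lemma strongly_holomorphic_imp_weakly_holomorphic:
  assumes u: "strongly_holomorphic_on u W" and \<phi>: "\<phi> \<in> lc_dual {norm}"
  shows "(\<lambda>s. \<phi> (u s)) holomorphic_on W"
  unfolding holomorphic_on_def
proof
  fix s assume s: "s \<in> W"
  obtain L where L: "((\<lambda>t. scaleC (1 / (t - s)) (u t - u s)) \<longlongrightarrow> L) (at s)"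
    using u s unfolding strongly_holomorphic_on_def by blast
  have "((\<lambda>t. \<phi> (scaleC (1 / (t - s)) (u t - u s))) \<longlongrightarrow> \<phi> L) (at s)"
    using continuous_on_tendsto_compose[OF continuous_on_lc_dual_norm[OF \<phi>] L] by simp
  then have "((\<lambda>t. (\<phi> (u t) - \<phi> (u s)) / (t - s)) \<longlongrightarrow> \<phi> L) (at s)"
    by (simp add: lc_dual_scaleC[OF \<phi>] lc_dual_diff[OF \<phi>])
  then have "((\<lambda>t. \<phi> (u t)) has_field_derivative \<phi> L) (at s)"
    by (simp add: has_field_derivative_iff)
  then show "(\<lambda>s. \<phi> (u s)) field_differentiable at s within W"
    using field_differentiable_at_within field_differentiable_def by blast
qed

lemma HG_norm_iff_strongly_holomorphic:
  fixes f :: "'a::complex_vector \<Rightarrow> 'c::complex_banach_algebra_1"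
  assumes \<Omega>: "one_open \<Omega>"
  shows "f \<in> HG {norm} \<Omega> \<longleftrightarrow> (\<forall>a v. strongly_holomorphic_on (\<lambda>l. f (a + scaleC l v)) (line_trace \<Omega> a v))"
proof -
  have "(\<forall>\<phi>\<in>lc_dual {norm}. (\<lambda>l. \<phi> (f (a + scaleC l v))) holomorphic_on line_trace \<Omega> a v)
      \<longleftrightarrow> strongly_holomorphic_on (\<lambda>l. f (a + scaleC l v)) (line_trace \<Omega> a v)" for a v
    using weakly_holomorphic_imp_strongly_holomorphic[OF open_line_trace[OF \<Omega>], of "\<lambda>l. f (a + scaleC l v)"]
      strongly_holomorphic_imp_weakly_holomorphic by blast
  then show ?thesis unfolding HG_iff_lines[OF \<Omega>] by blast
qed

lemma HG_mult:
  fixes f g :: "'a::complex_vector \<Rightarrow> 'c::complex_banach_algebra_1"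
  assumes "one_open \<Omega>" "f \<in> HG {norm} \<Omega>" "g \<in> HG {norm} \<Omega>"
  shows "(\<lambda>x. f x * g x) \<in> HG {norm} \<Omega>"
  using assms by (simp add: HG_norm_iff_strongly_holomorphic strongly_holomorphic_on_mult)

lemma HG_inverse:
  fixes f g :: "'a::complex_vector \<Rightarrow> 'c::complex_banach_algebra_1"
  assumes \<Omega>: "one_open \<Omega>" and f: "f \<in> HG {norm} \<Omega>"
    and inv: "\<And>x. x \<in> \<Omega> \<Longrightarrow> f x * g x = 1 \<and> g x * f x = 1"
  shows "g \<in> HG {norm} \<Omega>"
  unfolding HG_norm_iff_strongly_holomorphic[OF \<Omega>]
proof (intro allI)
  fix a v
  have "strongly_holomorphic_on (\<lambda>l. f (a + scaleC l v)) (line_trace \<Omega> a v)"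
    using f unfolding HG_norm_iff_strongly_holomorphic[OF \<Omega>] by blast
  then show "strongly_holomorphic_on (\<lambda>l. g (a + scaleC l v)) (line_trace \<Omega> a v)"
    by (rule strongly_holomorphic_on_inverse[OF _ open_line_trace[OF \<Omega>]]) (simp add: inv line_trace_def)
qed

section \<open>Extensions into a Banach algebra\<close>

lemma is_ext_add:
  "one_open \<Omega> \<Longrightarrow> is_ext P \<Omega> C f F \<Longrightarrow> is_ext P \<Omega> C g G \<Longrightarrow>
     is_ext P \<Omega> C (\<lambda>x. f x + g x) (\<lambda>x. F x + G x)"
  by (simp add: is_ext_def HG_add)

lemma is_ext_scaleC:
  "one_open \<Omega> \<Longrightarrow> is_ext P \<Omega> C f F \<Longrightarrow> is_ext P \<Omega> C (\<lambda>x. scaleC c (f x)) (\<lambda>x. scaleC c (F x))"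
  by (simp add: is_ext_def HG_scaleC)

lemma is_ext_mult:
  fixes f g :: "'a::complex_vector \<Rightarrow> 'c::complex_banach_algebra_1"
  shows "one_open \<Omega> \<Longrightarrow> is_ext {norm} \<Omega> C f F \<Longrightarrow> is_ext {norm} \<Omega> C g G \<Longrightarrow>
     is_ext {norm} \<Omega> C (\<lambda>x. f x * g x) (\<lambda>x. F x * G x)"
  by (simp add: is_ext_def HG_mult)

lemma is_ext_const: "one_open \<Omega> \<Longrightarrow> is_ext P \<Omega> C (\<lambda>x. c) (\<lambda>x. c)"
  by (simp add: is_ext_def HG_const)

lemma ext_image_subset_invertibles:
  fixes f :: "'a::complex_vector \<Rightarrow> 'c::complex_banach_algebra_1"
  assumes \<Omega>0: "one_open \<Omega>0" and \<Omega>: "one_open \<Omega>" and C: "C \<subseteq> \<Omega>0"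
    and ue: "unique_ext_property {norm :: 'c \<Rightarrow> real} \<Omega>0 \<Omega> C"
    and f: "f \<in> HG {norm} \<Omega>0" and F: "is_ext {norm} \<Omega> C f F" and invertible: "f ` \<Omega>0 \<subseteq> invertibles"
  shows "F ` \<Omega> \<subseteq> invertibles"
proof -
  have "\<forall>x\<in>\<Omega>0. \<exists>z. f x * z = 1 \<and> z * f x = 1" using invertible unfolding invertibles_def by blast
  then obtain g where g: "\<forall>x\<in>\<Omega>0. f x * g x = 1 \<and> g x * f x = 1" by (rule bchoice[elim_format]) blast
  then have "g \<in> HG {norm} \<Omega>0" using HG_inverse[OF \<Omega>0 f] by blast
  then obtain G where G: "is_ext {norm} \<Omega> C g G"
    using ue unfolding unique_ext_property_def by blast
  have "is_ext {norm} \<Omega> C (\<lambda>x. 1) (\<lambda>x. F x * G x)" "is_ext {norm} \<Omega> C (\<lambda>x. 1) (\<lambda>x. G x * F x)"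
    using is_ext_mult[OF \<Omega> F G] is_ext_mult[OF \<Omega> G F] g C unfolding is_ext_def by auto
  then have "F x * G x = 1 \<and> G x * F x = 1" if "x \<in> \<Omega>" for x
    using unique_ext_property_eq[OF ue HG_const[OF \<Omega>0] _ is_ext_const[OF \<Omega>] that] by blast
  then show ?thesis unfolding invertibles_def by blast
qed

theorem mainTheorem8:
  fixes \<Omega>0 \<Omega> C :: "'a::complex_vector set"
  assumes dimX: "\<exists>u v::'a. \<forall>a b::complex. scaleC a u + scaleC b v = 0 \<longrightarrow> a = 0 \<and> b = 0"
    and open0: "one_open \<Omega>0" and open1: "one_open \<Omega>"
    and C_sub: "C \<subseteq> \<Omega>0 \<inter> \<Omega>"
  shows
    "(\<forall>P :: ('b::complex_vector \<Rightarrow> real) set.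
        sc_hausdorff_lcs P \<and> (UNIV :: 'b set) \<noteq> {0} \<and> unique_ext_property P \<Omega>0 \<Omega> C \<longrightarrow>
        (\<forall>h\<in>HG_scalar \<Omega>0. \<exists>H. is_ext_scalar \<Omega> C h H \<and>
              (\<forall>H'. is_ext_scalar \<Omega> C h H' \<longrightarrow> (\<forall>x\<in>\<Omega>. H' x = H x)))
        \<and> (\<forall>h\<in>HG_scalar \<Omega>0. \<forall>f\<in>HG P \<Omega>0. \<forall>H F. is_ext_scalar \<Omega> C h H \<and> is_ext P \<Omega> C f F \<longrightarrow>
              is_ext P \<Omega> C (\<lambda>x. scaleC (h x) (f x)) (\<lambda>x. scaleC (H x) (F x)))
        \<and> (\<forall>h\<in>HG_scalar \<Omega>0. \<forall>H. is_ext_scalar \<Omega> C h H \<longrightarrow> H ` \<Omega> \<subseteq> h ` \<Omega>0)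
        \<and> (\<forall>f\<in>HG P \<Omega>0. \<forall>F. is_ext P \<Omega> C f F \<longrightarrow> F ` \<Omega> \<subseteq> closed_convex_hull P (f ` \<Omega>0)))
     \<and>
     (\<forall>N :: ('c::complex_banach_algebra_1 \<Rightarrow> real) set. N = {norm} \<and> unique_ext_property N \<Omega>0 \<Omega> C \<longrightarrow>
        (\<forall>f\<in>HG N \<Omega>0. \<forall>g\<in>HG N \<Omega>0. \<forall>F G.
              is_ext N \<Omega> C f F \<and> is_ext N \<Omega> C g G \<longrightarrow>
                 is_ext N \<Omega> C (\<lambda>x. f x + g x) (\<lambda>x. F x + G x)
               \<and> (\<forall>c. is_ext N \<Omega> C (\<lambda>x. scaleC c (f x)) (\<lambda>x. scaleC c (F x)))
               \<and> is_ext N \<Omega> C (\<lambda>x. f x * g x) (\<lambda>x. F x * G x))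
        \<and> is_ext N \<Omega> C (\<lambda>x. 1::'c) (\<lambda>x. 1)
        \<and> (\<forall>f\<in>HG N \<Omega>0. \<forall>F. is_ext N \<Omega> C f F \<and> f ` \<Omega>0 \<subseteq> invertibles \<longrightarrow>
              F ` \<Omega> \<subseteq> invertibles))"
proof -
  have C: "C \<subseteq> \<Omega>0" using C_sub by blast
  show ?thesis
  proof ((rule conjI; intro allI impI; elim conjE), goal_cases)
    case (1 P)
    then have P: "\<forall>p\<in>P. seminorm p" by (simp add: sc_hausdorff_lcs_def)
    have scalar: "unique_ext_property_scalar \<Omega>0 \<Omega> C"
      using 1 by (intro unique_ext_property_scalar_if_vector open0 open1)
    show ?case
      using scalar[unfolded unique_ext_property_scalar_def]
        is_ext_scalar_scaleC[OF open1] ext_scalar_image_subset[OF open0 open1 C scalar]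
        ext_image_subset_closed_convex_hull[OF open0 open1 C P 1(2,3) scalar]
      by blast
  next
    case (2 N)
    then have ue: "unique_ext_property {norm :: 'c \<Rightarrow> real} \<Omega>0 \<Omega> C" by simp
    show ?case
      unfolding \<open>N = {norm}\<close>
      by (intro conjI ballI allI impI; (elim conjE)?;
          rule is_ext_add is_ext_scaleC is_ext_mult is_ext_const
            ext_image_subset_invertibles[OF open0 open1 C ue];
          (assumption | rule open1))
  qed
qed

end
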